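(* There exists a countable group $G$ with the following two properties: \begin{itemize} \item for every $m \geq 1$ and every $w \in F_m \setminus [F_m, F_m]$, the word map $w \colon G^m \to G$ is surjective; \item the real vector space $\operatorname{Q}(G)/\operatorname{Hom}(G)$ is infinite-dimensional. \end{itemize}
   Context: $F_m$ denotes the free group of rank $m$ with basis $x_1,\dots,x_m$. An element $w \in F_m$ defines a word map $w \colon G^m \to G$ by substituting $x_i \mapsto g_i$ for $(g_1,\dots,g_m)\in G^m$. A quasimorphism on $G$ is a function $\varphi\colon G\to\mathbb{R}$ with finite defect $D(\varphi)=\sup_{g,h\in G}|\varphi(g)+\varphi(h)-\varphi(gh)|$; it is homogeneous if $\varphi(g^n)=n\varphi(g)$ for all $g\in G$, $n\in\mathbb{Z}$. $\operatorname{Q}(G)$ is the real vector space of homogeneous quasimorphisms on $G$ and $\operatorname{Hom}(G)$ the subspace of homomorphisms $G\to\mathbb{R}$. *)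

theory Defs
  imports "HOL-Algebra.Algebra"
begin

text \<open>A letter (i, False) stands for the generator x_i, (i, True) for its inverse.
  Generators are indexed by 0..m-1.\<close>
type_synonym letter = "nat \<times> bool"

definition inverse_letters :: "letter \<Rightarrow> letter \<Rightarrow> bool" where
  "inverse_letters a b \<longleftrightarrow> fst a = fst b \<and> snd a \<noteq> snd b"

fun reduced :: "letter list \<Rightarrow> bool" where
  "reduced [] = True"
| "reduced [a] = True"
| "reduced (a # b # w) = (\<not> inverse_letters a b \<and> reduced (b # w))"

definition reduce :: "letter list \<Rightarrow> letter list" where
  "reduce w = foldr (\<lambda>a acc. case acc of [] \<Rightarrow> [a]
                     | b # rest \<Rightarrow> (if inverse_letters a b then rest else a # acc)) w []"

definition free_group :: "nat \<Rightarrow> letter list monoid" where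
  "free_group m = \<lparr> carrier = {w. (\<forall>a\<in>set w. fst a < m) \<and> reduced w},
                   monoid.mult = (\<lambda>u v. reduce (u @ v)),
                   one = [] \<rparr>"

definition commutator_subgroup_free :: "nat \<Rightarrow> letter list set" where
  "commutator_subgroup_free m = derived (free_group m) (carrier (free_group m))"

definition eval_letter :: "('a, 'b) monoid_scheme \<Rightarrow> (nat \<Rightarrow> 'a) \<Rightarrow> letter \<Rightarrow> 'a" where
  "eval_letter G g a = (if snd a then inv\<^bsub>G\<^esub> (g (fst a)) else g (fst a))"

definition word_map :: "('a, 'b) monoid_scheme \<Rightarrow> letter list \<Rightarrow> (nat \<Rightarrow> 'a) \<Rightarrow> 'a" where
  "word_map G w g = foldr (\<lambda>a acc. eval_letter G g a \<otimes>\<^bsub>G\<^esub> acc) w \<one>\<^bsub>G\<^esub>"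

definition word_map_surjective :: "('a, 'b) monoid_scheme \<Rightarrow> nat \<Rightarrow> letter list \<Rightarrow> bool" where
  "word_map_surjective G m w \<longleftrightarrow>
     (\<forall>h\<in>carrier G. \<exists>g. (\<forall>i<m. g i \<in> carrier G) \<and> word_map G w g = h)"

definition quasimorphism :: "('a, 'b) monoid_scheme \<Rightarrow> ('a \<Rightarrow> real) \<Rightarrow> bool" where
  "quasimorphism G \<phi> \<longleftrightarrow>
     (\<exists>D. \<forall>g\<in>carrier G. \<forall>h\<in>carrier G. \<bar>\<phi> g + \<phi> h - \<phi> (g \<otimes>\<^bsub>G\<^esub> h)\<bar> \<le> D)"

definition homogeneous_qm :: "('a, 'b) monoid_scheme \<Rightarrow> ('a \<Rightarrow> real) set" where
  "homogeneous_qm G = {\<phi>. quasimorphism G \<phi> \<and>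
     (\<forall>g\<in>carrier G. \<forall>n::int. \<phi> (g [^]\<^bsub>G\<^esub> n) = of_int n * \<phi> g)}"

definition real_homs :: "('a, 'b) monoid_scheme \<Rightarrow> ('a \<Rightarrow> real) set" where
  "real_homs G = {\<phi>. \<forall>g\<in>carrier G. \<forall>h\<in>carrier G. \<phi> (g \<otimes>\<^bsub>G\<^esub> h) = \<phi> g + \<phi> h}"

text \<open>Functions are compared on the carrier only (Q(G) consists of functions G \<rightarrow> R).
  Q(G)/Hom(G) is finite-dimensional iff finitely many elements of Q(G) span Q(G) modulo Hom(G).\<close>
definition qm_quotient_finite_dim :: "('a, 'b) monoid_scheme \<Rightarrow> bool" where
  "qm_quotient_finite_dim G \<longleftrightarrow>
     (\<exists>n::nat. \<exists>s :: nat \<Rightarrow> 'a \<Rightarrow> real. (\<forall>i<n. s i \<in> homogeneous_qm G) \<and>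
        (\<forall>\<phi>\<in>homogeneous_qm G. \<exists>c :: nat \<Rightarrow> real. \<exists>\<psi>\<in>real_homs G.
            \<forall>x\<in>carrier G. \<phi> x = \<psi> x + (\<Sum>i<n. c i * s i x)))"

end

theory Submission
  imports Defs "HOL-Analysis.Complex_Transcendental"
begin

(* In a divisible group every word map w : G^m \<rightarrow> G with w \<notin> [F_m, F_m] is surjective: some
   exponent sum e of w is nonzero, and plugging an e-th root of h into that generator (and 1
   elsewhere) gives h. So it suffices to find a countable divisible group G with Q(G)/Hom(G)
   infinite-dimensional.

   Let H be the central extension of PSL2(R) by R defined by the bounded cocycle
   \<omega>(A, B) = Arg (a(AB) / (a(A) a(B))), where a(A) is the diagonal entry of A transported to
   SU(1,1). H is divisible because every element of SL2(R) has n-th roots up to sign, and the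
   projection H \<rightarrow> R is a quasimorphism whose homogenization \<phi> is not additive. In the
   restricted direct sum of countably many copies of H, which is still divisible, the
   quasimorphisms \<phi> \<circ> pr_j have defects d \<delta>_jk on pairs of elements supported in coordinate k,
   so they are linearly independent modulo homomorphisms. A countable divisible subgroup
   containing these pairs keeps both properties. *)

section \<open>Free reduction and the free group\<close>

definition inv_letter :: "letter \<Rightarrow> letter" where
  "inv_letter a = (fst a, \<not> snd a)"

definition reduce_step :: "letter \<Rightarrow> letter list \<Rightarrow> letter list" where
  "reduce_step a acc = (case acc of [] \<Rightarrow> [a]
                        | b # rest \<Rightarrow> (if inverse_letters a b then rest else a # acc))"

lemma reduce_step_Nil [simp]: "reduce_step a [] = [a]"
  by (simp add: reduce_step_def)

lemma reduce_step_Cons [simp]: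
  "reduce_step a (b # rest) = (if inverse_letters a b then rest else a # b # rest)"
  by (simp add: reduce_step_def)

lemma reduce_eq_foldr: "reduce w = foldr reduce_step w []"
  unfolding reduce_def reduce_step_def[abs_def] ..

lemma reduce_Nil [simp]: "reduce [] = []"
  by (simp add: reduce_eq_foldr)

lemma reduce_Cons: "reduce (a # w) = reduce_step a (reduce w)"
  by (simp add: reduce_eq_foldr)

lemma reduce_append: "reduce (u @ v) = foldr reduce_step u (reduce v)"
  by (induction u) (simp_all add: reduce_Cons)

lemma reduced_ConsD: "reduced (b # w) \<Longrightarrow> reduced w"
  by (cases w) auto

lemma reduced_reduce_step: "reduced acc \<Longrightarrow> reduced (reduce_step a acc)"
  by (cases acc) (auto dest: reduced_ConsD)

lemma reduced_foldr_reduce_step: "reduced acc \<Longrightarrow> reduced (foldr reduce_step u acc)"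
  by (induction u) (auto simp: reduced_reduce_step)

lemma reduced_reduce: "reduced (reduce w)"
  using reduced_foldr_reduce_step[of "[]" w] by (simp add: reduce_eq_foldr)

lemma inverse_letters_iff: "inverse_letters a b \<longleftrightarrow> b = inv_letter a"
  by (cases a; cases b) (auto simp: inverse_letters_def inv_letter_def)

lemma inv_letter_inv_letter [simp]: "inv_letter (inv_letter a) = a"
  by (simp add: inv_letter_def)

lemma reduce_step_inv_letter:
  assumes "reduced acc"
  shows "reduce_step (inv_letter a) (reduce_step a acc) = acc"
proof (cases acc)
  case Nil
  then show ?thesis by (simp add: inverse_letters_iff)
next
  case (Cons b rest)
  show ?thesis
  proof (cases "inverse_letters a b")
    case True
    then have "b = inv_letter a" by (simp add: inverse_letters_iff)
    moreover have "rest = c # r \<Longrightarrow> \<not> inverse_letters b c" for c r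
      using assms Cons by simp
    ultimately show ?thesis
      using Cons True by (cases rest) (auto simp: inverse_letters_iff)
  next
    case False
    then show ?thesis using Cons by (simp add: inverse_letters_iff)
  qed
qed

lemma reduce_reduced: "reduced w \<Longrightarrow> reduce w = w"
proof (induction w)
  case Nil
  then show ?case by simp
next
  case (Cons a w)
  then have "reduce w = w" using reduced_ConsD by blast
  then show ?case using Cons.prems by (cases w) (auto simp: reduce_Cons)
qed

lemma foldr_reduce_step_reduce:
  "reduced acc \<Longrightarrow> foldr reduce_step (reduce u) acc = foldr reduce_step u acc"
proof (induction u)
  case Nil
  then show ?case by simp
next
  case (Cons a u)
  show ?case
  proof (cases "reduce u")
    case Nil
    then show ?thesis using Cons by (simp add: reduce_Cons)
  next
    case (Cons b rest)
    show ?thesis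
    proof (cases "inverse_letters a b")
      case True
      then have "b = inv_letter a" by (simp add: inverse_letters_iff)
      then have "foldr reduce_step (a # u) acc
          = reduce_step a (reduce_step (inv_letter a) (foldr reduce_step rest acc))"
        using Cons.IH[OF Cons.prems] Cons by simp
      also have "\<dots> = foldr reduce_step rest acc"
        using reduce_step_inv_letter[of "foldr reduce_step rest acc" "inv_letter a"]
          reduced_foldr_reduce_step[OF Cons.prems] by simp
      finally show ?thesis using Cons True by (simp add: reduce_Cons)
    next
      case False
      then show ?thesis using Cons.IH[OF Cons.prems] Cons by (simp add: reduce_Cons)
    qed
  qed
qed

lemma set_reduce_step: "set (reduce_step a acc) \<subseteq> insert a (set acc)"
  by (cases acc) auto

lemma set_foldr_reduce_step: "set (foldr reduce_step u acc) \<subseteq> set u \<union> set acc"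
  by (induction u) (use set_reduce_step in fastforce)+

lemma set_reduce: "set (reduce u) \<subseteq> set u"
  using set_foldr_reduce_step[of u "[]"] by (simp add: reduce_eq_foldr)

definition inv_word :: "letter list \<Rightarrow> letter list" where
  "inv_word u = rev (map inv_letter u)"

lemma foldr_reduce_step_inv_word:
  "reduced acc \<Longrightarrow> foldr reduce_step u (foldr reduce_step (inv_word u) acc) = acc"
proof (induction u arbitrary: acc)
  case Nil
  then show ?case by (simp add: inv_word_def)
next
  case (Cons a u)
  have "foldr reduce_step (a # u) (foldr reduce_step (inv_word (a # u)) acc)
      = reduce_step a (foldr reduce_step u
          (foldr reduce_step (inv_word u) (reduce_step (inv_letter a) acc)))"
    by (simp add: inv_word_def)
  also have "\<dots> = reduce_step a (reduce_step (inv_letter a) acc)"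
    using Cons.IH reduced_reduce_step[OF Cons.prems] by simp
  also have "\<dots> = acc"
    using reduce_step_inv_letter[OF Cons.prems, of "inv_letter a"] by simp
  finally show ?case .
qed

lemma foldr_reduce_step_inv_word':
  "reduced acc \<Longrightarrow> foldr reduce_step (inv_word u) (foldr reduce_step u acc) = acc"
  using foldr_reduce_step_inv_word[of acc "inv_word u"]
  by (simp add: inv_word_def rev_map comp_def)

lemma group_free_group: "group (free_group m)"
proof (rule groupI)
  let ?F = "free_group m"
  show "x \<otimes>\<^bsub>?F\<^esub> y \<in> carrier ?F" if "x \<in> carrier ?F" "y \<in> carrier ?F" for x y
    using that set_reduce[of "x @ y"] reduced_reduce[of "x @ y"]
    by (auto simp: free_group_def)
  show "\<one>\<^bsub>?F\<^esub> \<in> carrier ?F"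
    by (simp add: free_group_def)
  show "x \<otimes>\<^bsub>?F\<^esub> y \<otimes>\<^bsub>?F\<^esub> z = x \<otimes>\<^bsub>?F\<^esub> (y \<otimes>\<^bsub>?F\<^esub> z)" for x y z
  proof -
    have "reduce (reduce (x @ y) @ z) = foldr reduce_step (reduce (x @ y)) (reduce z)"
      by (simp only: reduce_append)
    also have "\<dots> = foldr reduce_step (x @ y) (reduce z)"
      by (simp add: foldr_reduce_step_reduce reduced_reduce)
    also have "\<dots> = foldr reduce_step x (reduce (y @ z))"
      by (simp add: reduce_append)
    also have "\<dots> = reduce (x @ reduce (y @ z))"
      by (simp only: reduce_append[of x] reduce_reduced[OF reduced_reduce])
    finally show ?thesis by (simp add: free_group_def)
  qed
  show "\<one>\<^bsub>?F\<^esub> \<otimes>\<^bsub>?F\<^esub> x = x" if "x \<in> carrier ?F" for x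
    using that by (simp add: free_group_def reduce_reduced)
  show "\<exists>y\<in>carrier ?F. y \<otimes>\<^bsub>?F\<^esub> x = \<one>\<^bsub>?F\<^esub>" if x: "x \<in> carrier ?F" for x
  proof
    have "reduced x" using x by (simp add: free_group_def)
    then have "reduce (reduce (inv_word x) @ x) = []"
      using foldr_reduce_step_inv_word'[of "[]" x] foldr_reduce_step_reduce[of x "inv_word x"]
      by (simp add: reduce_append reduce_reduced reduce_eq_foldr[symmetric])
    then show "reduce (inv_word x) \<otimes>\<^bsub>?F\<^esub> x = \<one>\<^bsub>?F\<^esub>"
      by (simp add: free_group_def)
    show "reduce (inv_word x) \<in> carrier ?F"
      using x set_reduce[of "inv_word x"] reduced_reduce[of "inv_word x"]
      by (force simp: free_group_def inv_word_def inv_letter_def)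
  qed
qed

section \<open>Word maps and exponent sums\<close>

lemma word_map_Nil [simp]: "word_map G [] g = \<one>\<^bsub>G\<^esub>"
  by (simp add: word_map_def)

lemma word_map_Cons: "word_map G (a # w) g = eval_letter G g a \<otimes>\<^bsub>G\<^esub> word_map G w g"
  by (simp add: word_map_def)

lemma (in group) eval_letter_closed:
  "g (fst a) \<in> carrier G \<Longrightarrow> eval_letter G g a \<in> carrier G"
  by (simp add: eval_letter_def)

lemma (in group) word_map_closed:
  "\<forall>a\<in>set w. g (fst a) \<in> carrier G \<Longrightarrow> word_map G w g \<in> carrier G"
  by (induction w) (auto simp: word_map_Cons eval_letter_closed)

lemma word_map_hom:
  assumes "group_hom G H h" and "\<forall>a\<in>set w. g (fst a) \<in> carrier G"
  shows "h (word_map G w g) = word_map H w (h \<circ> g)"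
  using assms(2)
proof (induction w)
  case Nil
  then show ?case using assms(1) by (simp add: group_hom.hom_one)
next
  case (Cons a w)
  interpret group_hom G H h by fact
  have ga: "g (fst a) \<in> carrier G" using Cons by simp
  then have "h (eval_letter G g a) = eval_letter H (h \<circ> g) a"
    by (simp add: eval_letter_def hom_inv)
  then show ?case using Cons ga
    by (simp add: word_map_Cons G.word_map_closed G.eval_letter_closed comp_def)
qed

definition exponent_sum :: "nat \<Rightarrow> letter list \<Rightarrow> int" where
  "exponent_sum j w = sum_list (map (\<lambda>a. if fst a = j then (if snd a then -1 else 1) else 0) w)"

lemma exponent_sum_Nil [simp]: "exponent_sum j [] = 0"
  by (simp add: exponent_sum_def)

lemma exponent_sum_Cons:
  "exponent_sum j (a # w) = (if fst a = j then (if snd a then -1 else 1) else 0) + exponent_sum j w"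
  by (simp add: exponent_sum_def)

lemma (in group) word_map_single_generator:
  assumes y: "y \<in> carrier G"
  shows "word_map G w (\<lambda>i. if i = j then y else \<one>) = y [^] exponent_sum j w"
proof (induction w)
  case Nil
  then show ?case by simp
next
  case (Cons a w)
  have "eval_letter G (\<lambda>i. if i = j then y else \<one>) a
      = y [^] (if fst a = j then (if snd a then -1 else 1) else (0::int))"
    using y by (auto simp: eval_letter_def int_pow_neg)
  then show ?case
    by (simp add: word_map_Cons Cons exponent_sum_Cons int_pow_mult y)
qed

lemma (in comm_group) word_map_eq_finprod:
  assumes I: "finite I" "\<forall>a\<in>set w. fst a \<in> I" and g: "g \<in> I \<rightarrow> carrier G"
  shows "word_map G w g = finprod G (\<lambda>j. g j [^] exponent_sum j w) I"
  using assms(2)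
proof (induction w)
  case Nil
  then show ?case by simp
next
  case (Cons a w)
  have aI: "fst a \<in> I" using Cons by simp
  have ga: "g (fst a) \<in> carrier G" using aI g by auto
  define e :: int where "e = (if snd a then -1 else 1)"
  have ev: "eval_letter G g a = g (fst a) [^] e"
    using ga by (auto simp: eval_letter_def e_def int_pow_neg)
  have "finprod G (\<lambda>j. g j [^] exponent_sum j (a # w)) I
      = finprod G (\<lambda>j. (if fst a = j then g (fst a) [^] e else \<one>) \<otimes> g j [^] exponent_sum j w) I"
  proof (rule finprod_cong')
    fix j assume "j \<in> I"
    then have "g j \<in> carrier G" using g by auto
    then show "g j [^] exponent_sum j (a # w)
        = (if fst a = j then g (fst a) [^] e else \<one>) \<otimes> g j [^] exponent_sum j w"
      by (auto simp: exponent_sum_Cons e_def int_pow_mult)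
  qed (use g ga in \<open>auto simp: Pi_iff\<close>)
  also have "\<dots> = finprod G (\<lambda>j. if fst a = j then g (fst a) [^] e else \<one>) I
                 \<otimes> finprod G (\<lambda>j. g j [^] exponent_sum j w) I"
    by (rule finprod_multf) (use g ga in auto)
  also have "finprod G (\<lambda>j. if fst a = j then g (fst a) [^] e else \<one>) I = g (fst a) [^] e"
    using finprod_singleton[of "fst a" I "\<lambda>_. g (fst a) [^] e"] aI I ga by auto
  finally show ?case using Cons ev by (simp add: word_map_Cons)
qed

definition free_generator :: "nat \<Rightarrow> letter list" where
  "free_generator j = [(j, False)]"

lemma inv_free_generator:
  assumes "j < m"
  shows "inv\<^bsub>free_group m\<^esub> (free_generator j) = [(j, True)]"
proof -
  interpret group "free_group m" by (rule group_free_group)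
  show ?thesis
  proof (rule inv_equality)
    show "[(j, True)] \<otimes>\<^bsub>free_group m\<^esub> free_generator j = \<one>\<^bsub>free_group m\<^esub>"
      by (simp add: free_group_def free_generator_def reduce_Cons inverse_letters_def)
  qed (use assms in \<open>auto simp: free_group_def free_generator_def\<close>)
qed

lemma word_map_free_generator:
  assumes "w \<in> carrier (free_group m)"
  shows "word_map (free_group m) w free_generator = w"
proof -
  have "word_map (free_group m) w free_generator = reduce w" if "\<forall>a\<in>set w. fst a < m"
    using that
  proof (induction w)
    case Nil
    then show ?case by (simp add: free_group_def)
  next
    case (Cons a w)
    have "eval_letter (free_group m) free_generator a = [a]"
      using Cons.prems inv_free_generator[of "fst a" m]
      by (cases a) (auto simp: eval_letter_def free_generator_def)
    then have "word_map (free_group m) (a # w) free_generator = [a] \<otimes>\<^bsub>free_group m\<^esub> reduce w"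
      using Cons by (simp add: word_map_Cons)
    also have "\<dots> = reduce (a # w)"
      by (simp add: free_group_def reduce_append reduce_Cons reduce_reduced reduced_reduce)
    finally show ?case .
  qed
  then show ?thesis using assms by (simp add: free_group_def reduce_reduced)
qed

text \<open>In the abelianization F_m / [F_m, F_m] a word evaluates to the product of the
  generators raised to its exponent sums.\<close>

lemma exponent_sums_zero_imp_commutator:
  assumes w: "w \<in> carrier (free_group m)" and zero: "\<forall>j<m. exponent_sum j w = 0"
  shows "w \<in> commutator_subgroup_free m"
proof -
  let ?F = "free_group m"
  let ?C = "derived ?F (carrier ?F)"
  let ?\<pi> = "\<lambda>x. ?C #>\<^bsub>?F\<^esub> x"
  interpret F: group ?F by (rule group_free_group)
  interpret N: normal ?C ?F by (rule F.derived_self_is_normal)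
  interpret Q: comm_group "?F Mod ?C" by (rule F.derived_quot_is_comm_group)
  have hom: "?\<pi> \<in> hom ?F (?F Mod ?C)" by (rule N.r_coset_hom_Mod)
  then have "group_hom ?F (?F Mod ?C) ?\<pi>"
    by (simp add: group_hom_def group_hom_axioms_def F.group_axioms N.factorgroup_is_group)
  moreover have "\<forall>a\<in>set w. free_generator (fst a) \<in> carrier ?F"
    using w by (auto simp: free_group_def free_generator_def)
  ultimately have "?\<pi> w = word_map (?F Mod ?C) w (?\<pi> \<circ> free_generator)"
    using word_map_hom word_map_free_generator[OF w] by metis
  also have "\<dots> = finprod (?F Mod ?C) (\<lambda>j. (?\<pi> \<circ> free_generator) j [^]\<^bsub>?F Mod ?C\<^esub> exponent_sum j w) {..<m}"
  proof (rule Q.word_map_eq_finprod)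
    show "\<forall>a\<in>set w. fst a \<in> {..<m}" using w by (auto simp: free_group_def)
    show "?\<pi> \<circ> free_generator \<in> {..<m} \<rightarrow> carrier (?F Mod ?C)"
      using hom by (auto simp: hom_def free_group_def free_generator_def)
  qed simp
  also have "\<dots> = finprod (?F Mod ?C) (\<lambda>j. \<one>\<^bsub>?F Mod ?C\<^esub>) {..<m}"
    by (rule Q.finprod_cong') (use zero Q.one_closed in auto)
  also have "\<dots> = \<one>\<^bsub>?F Mod ?C\<^esub>"
    by (rule Q.finprod_one)
  finally have "?\<pi> w = ?C" by simp
  moreover have "w \<in> ?\<pi> w" using w by (simp add: F.rcos_self N.subgroup_axioms)
  ultimately show ?thesis by (simp add: commutator_subgroup_free_def)
qed

definition divisible_group :: "('a, 'b) monoid_scheme \<Rightarrow> bool" where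
  "divisible_group G \<longleftrightarrow> (\<forall>h\<in>carrier G. \<forall>n::nat. n \<ge> 1 \<longrightarrow> (\<exists>y\<in>carrier G. y [^]\<^bsub>G\<^esub> n = h))"

lemma (in group) divisible_group_int_root:
  assumes "divisible_group G" and h: "h \<in> carrier G" and k: "k \<noteq> (0::int)"
  shows "\<exists>y\<in>carrier G. y [^] k = h"
proof (cases "k > 0")
  case True
  then have "nat k \<ge> 1" by simp
  then obtain y where y: "y \<in> carrier G" "y [^] nat k = h"
    using assms(1) h unfolding divisible_group_def by blast
  then show ?thesis using True int_pow_int[of G y "nat k"] by auto
next
  case False
  then have "nat (-k) \<ge> 1" using k by simp
  then obtain y where y: "y \<in> carrier G" "y [^] nat (-k) = inv h"
    using assms(1) h unfolding divisible_group_def by (meson inv_closed)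
  have "k = - int (nat (-k))" using False by simp
  then have "y [^] k = inv (y [^] nat (-k))"
    using y(1) by (metis int_pow_neg_int)
  then show ?thesis using y h by auto
qed

lemma divisible_group_word_map_surjective:
  fixes G :: "('a, 'b) monoid_scheme" (structure)
  assumes "group G" and "divisible_group G"
    and w: "w \<in> carrier (free_group m) - commutator_subgroup_free m"
  shows "word_map_surjective G m w"
  unfolding word_map_surjective_def
proof
  interpret group G by fact
  fix h assume h: "h \<in> carrier G"
  obtain j where j: "j < m" "exponent_sum j w \<noteq> 0"
    using exponent_sums_zero_imp_commutator w by blast
  obtain y where "y \<in> carrier G" "y [^] exponent_sum j w = h"
    using divisible_group_int_root[OF assms(2) h j(2)] by blast
  then show "\<exists>g. (\<forall>i<m. g i \<in> carrier G) \<and> word_map G w g = h"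
    using word_map_single_generator by (intro exI[of _ "\<lambda>i. if i = j then y else \<one>"]) auto
qed

section \<open>Homogenization of quasimorphisms\<close>

definition qm_defect_le :: "('a, 'b) monoid_scheme \<Rightarrow> ('a \<Rightarrow> real) \<Rightarrow> real \<Rightarrow> bool" where
  "qm_defect_le G f D \<longleftrightarrow> (\<forall>x\<in>carrier G. \<forall>y\<in>carrier G. \<bar>f x + f y - f (x \<otimes>\<^bsub>G\<^esub> y)\<bar> \<le> D)"

definition homogenization :: "('a, 'b) monoid_scheme \<Rightarrow> ('a \<Rightarrow> real) \<Rightarrow> 'a \<Rightarrow> real" where
  "homogenization G f x = lim (\<lambda>n. f (x [^]\<^bsub>G\<^esub> Suc n) / real (Suc n))"

declare nat_pow_Suc [simp del] monoid.nat_pow_Suc [simp del]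

context group
begin

declare nat_pow_Suc [simp del]

lemma qm_defect_le_nonneg: "qm_defect_le G f D \<Longrightarrow> 0 \<le> D"
  unfolding qm_defect_le_def by (meson abs_ge_zero one_closed order_trans)

lemma qm_defect_le_nat_pow:
  assumes D: "qm_defect_le G f D" and x: "x \<in> carrier G"
  shows "\<bar>f (x [^] Suc n) - real (Suc n) * f x\<bar> \<le> real n * D"
proof (induction n)
  case 0
  then show ?case using x by (simp add: nat_pow_Suc)
next
  case (Suc n)
  have "\<bar>f (x [^] Suc n) + f x - f (x [^] Suc n \<otimes> x)\<bar> \<le> D"
    using D x unfolding qm_defect_le_def by (meson nat_pow_closed)
  moreover have "x [^] Suc (Suc n) = x [^] Suc n \<otimes> x" by (simp only: nat_pow_Suc)
  ultimately show ?case using Suc by (simp add: algebra_simps)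
qed

lemma homogenization_quotient_close:
  assumes D: "qm_defect_le G f D" and x: "x \<in> carrier G"
  shows "\<bar>f (x [^] (Suc p * Suc q)) / real (Suc p * Suc q) - f (x [^] Suc p) / real (Suc p)\<bar>
           \<le> D / real (Suc p)"
proof -
  have "x [^] (Suc p * Suc q) = (x [^] Suc p) [^] Suc q" using x by (simp add: nat_pow_pow)
  then have "\<bar>f (x [^] (Suc p * Suc q)) - real (Suc q) * f (x [^] Suc p)\<bar> \<le> real q * D"
    using qm_defect_le_nat_pow[OF D, of "x [^] Suc p" q] x by simp
  also have "\<dots> \<le> real (Suc q) * D" using qm_defect_le_nonneg[OF D] by (simp add: algebra_simps)
  finally have num: "\<bar>f (x [^] (Suc p * Suc q)) - real (Suc q) * f (x [^] Suc p)\<bar> \<le> real (Suc q) * D" .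
  have "f (x [^] (Suc p * Suc q)) / real (Suc p * Suc q) - f (x [^] Suc p) / real (Suc p)
      = (f (x [^] (Suc p * Suc q)) - real (Suc q) * f (x [^] Suc p)) / (real (Suc p) * real (Suc q))"
    unfolding of_nat_mult by (simp add: field_simps del: of_nat_Suc)
  also have "\<bar>\<dots>\<bar> = \<bar>f (x [^] (Suc p * Suc q)) - real (Suc q) * f (x [^] Suc p)\<bar>
                    / (real (Suc p) * real (Suc q))"
    by (simp only: abs_divide abs_of_pos of_nat_0_less_iff zero_less_Suc mult_pos_pos)
  also have "\<dots> \<le> real (Suc q) * D / (real (Suc p) * real (Suc q))"
    by (rule divide_right_mono[OF num]) simp
  also have "\<dots> = D / real (Suc p)" by (simp del: of_nat_Suc)
  finally show ?thesis .
qed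

lemma homogenization_Cauchy:
  assumes D: "qm_defect_le G f D" and x: "x \<in> carrier G"
  shows "Cauchy (\<lambda>n. f (x [^] Suc n) / real (Suc n))"
proof (rule metric_CauchyI)
  fix e :: real assume e: "0 < e"
  obtain M :: nat where M: "2 * D / e < real M" using reals_Archimedean2 by blast
  have D0: "0 \<le> D" by (rule qm_defect_le_nonneg[OF D])
  let ?b = "\<lambda>n. f (x [^] Suc n) / real (Suc n)"
  have "dist (?b m) (?b n) < e" if mn: "M \<le> m" "M \<le> n" for m n
  proof -
    let ?c = "f (x [^] (Suc m * Suc n)) / real (Suc m * Suc n)"
    have "\<bar>?c - ?b m\<bar> \<le> D / real (Suc m)"
      using homogenization_quotient_close[OF D x] by simp
    moreover have "\<bar>?c - ?b n\<bar> \<le> D / real (Suc n)"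
      using homogenization_quotient_close[OF D x, of n m] by (simp add: mult.commute)
    moreover have "D / real (Suc m) \<le> D / real (Suc M)" "D / real (Suc n) \<le> D / real (Suc M)"
      using mn D0 by (simp_all add: frac_le)
    moreover have "2 * (D / real (Suc M)) < e"
    proof -
      have "2 * D < e * real M" using M e by (simp add: field_simps)
      also have "\<dots> \<le> e * real (Suc M)" using e by simp
      finally show ?thesis by (simp add: field_simps)
    qed
    ultimately show ?thesis unfolding dist_real_def by linarith
  qed
  then show "\<exists>M. \<forall>m\<ge>M. \<forall>n\<ge>M. dist (?b m) (?b n) < e" by blast
qed

lemma homogenization_LIMSEQ:
  assumes "qm_defect_le G f D" and "x \<in> carrier G"
  shows "(\<lambda>n. f (x [^] Suc n) / real (Suc n)) \<longlonglongrightarrow> homogenization G f x"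
  using homogenization_Cauchy[OF assms] unfolding homogenization_def
  by (simp add: Cauchy_convergent_iff convergent_LIMSEQ_iff)

lemma homogenization_eqI:
  "(\<lambda>n. f (x [^] Suc n) / real (Suc n)) \<longlonglongrightarrow> L \<Longrightarrow> homogenization G f x = L"
  unfolding homogenization_def by (rule limI)

lemma homogenization_close:
  assumes D: "qm_defect_le G f D" and x: "x \<in> carrier G"
  shows "\<bar>homogenization G f x - f x\<bar> \<le> D"
proof -
  have close: "\<bar>f (x [^] Suc n) / real (Suc n) - f x\<bar> \<le> D" for n
  proof -
    have "f (x [^] Suc n) / real (Suc n) - f x = (f (x [^] Suc n) - real (Suc n) * f x) / real (Suc n)"
      by (simp add: field_simps)
    also have "\<bar>\<dots>\<bar> \<le> real n * D / real (Suc n)"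
      using qm_defect_le_nat_pow[OF D x, of n] by (simp add: abs_divide divide_right_mono)
    also have "\<dots> \<le> D" using qm_defect_le_nonneg[OF D] by (simp add: field_simps)
    finally show ?thesis .
  qed
  have "f x - D \<le> f (x [^] Suc n) / real (Suc n)" "f (x [^] Suc n) / real (Suc n) \<le> f x + D" for n
    using close[of n] unfolding abs_le_iff by linarith+
  then have "f x - D \<le> homogenization G f x" "homogenization G f x \<le> f x + D"
    using LIMSEQ_le_const[OF homogenization_LIMSEQ[OF D x]]
      LIMSEQ_le_const2[OF homogenization_LIMSEQ[OF D x]] by blast+
  then show ?thesis by auto
qed

lemma homogenization_one: "homogenization G f \<one> = 0"
proof (rule homogenization_eqI)
  have "(\<lambda>n. f \<one> * inverse (real (Suc n))) \<longlonglongrightarrow> f \<one> * 0"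
    by (intro tendsto_mult tendsto_const LIMSEQ_inverse_real_of_nat)
  then show "(\<lambda>n. f (\<one> [^] Suc n) / real (Suc n)) \<longlonglongrightarrow> 0"
    by (simp add: divide_inverse)
qed

lemma homogenization_nat_pow:
  assumes D: "qm_defect_le G f D" and x: "x \<in> carrier G"
  shows "homogenization G f (x [^] (k::nat)) = real k * homogenization G f x"
proof (cases k)
  case 0
  then show ?thesis by (simp add: homogenization_one)
next
  case (Suc k')
  let ?b = "\<lambda>n. f (x [^] Suc n) / real (Suc n)"
  define r where "r n = k * n + k'" for n
  have "strict_mono r" using Suc by (auto simp: strict_mono_Suc_iff r_def)
  then have "(\<lambda>n. real k * ?b (r n)) \<longlonglongrightarrow> real k * homogenization G f x"
    using LIMSEQ_subseq_LIMSEQ[OF homogenization_LIMSEQ[OF D x]]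
    by (intro tendsto_mult tendsto_const) (simp add: comp_def)
  moreover have "real k * ?b (r n) = f ((x [^] k) [^] Suc n) / real (Suc n)" for n
  proof -
    have e: "Suc (r n) = k * Suc n" using Suc by (simp add: r_def)
    then have "x [^] Suc (r n) = (x [^] k) [^] Suc n" using x by (simp add: nat_pow_pow)
    moreover have "real (Suc (r n)) = real k * real (Suc n)" using e by (metis of_nat_mult)
    ultimately show ?thesis using Suc by (simp del: of_nat_Suc)
  qed
  ultimately show ?thesis by (intro homogenization_eqI) simp
qed

lemma homogenization_inv:
  assumes D: "qm_defect_le G f D" and x: "x \<in> carrier G"
  shows "homogenization G f (inv x) = - homogenization G f x"
proof (rule homogenization_eqI)
  let ?b = "\<lambda>n. f (x [^] Suc n) / real (Suc n)"
  let ?c = "\<lambda>n. f (inv x [^] Suc n) / real (Suc n)"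
  have bound: "norm (?c n + ?b n) \<le> norm (inverse (real (Suc n))) * (\<bar>f \<one>\<bar> + D)" for n
  proof -
    have z: "x [^] Suc n \<in> carrier G" using x by blast
    then have "\<bar>f (x [^] Suc n) + f (inv (x [^] Suc n)) - f \<one>\<bar> \<le> D"
      using D unfolding qm_defect_le_def by (metis inv_closed r_inv)
    then have "\<bar>f (x [^] Suc n) + f (inv (x [^] Suc n))\<bar> \<le> \<bar>f \<one>\<bar> + D" by linarith
    moreover have "?c n + ?b n = (f (x [^] Suc n) + f (inv (x [^] Suc n))) * inverse (real (Suc n))"
      using x by (simp add: nat_pow_inv add_divide_distrib divide_inverse add.commute distrib_right)
    ultimately show ?thesis by (simp add: abs_mult mult.commute)
  qed
  have "(\<lambda>n. ?c n + ?b n) \<longlonglongrightarrow> 0"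
    by (rule tendsto_0_le[OF LIMSEQ_inverse_real_of_nat always_eventually]) (use bound in blast)
  then have "(\<lambda>n. (?c n + ?b n) - ?b n) \<longlonglongrightarrow> 0 - homogenization G f x"
    by (intro tendsto_diff homogenization_LIMSEQ[OF D x])
  then show "?c \<longlonglongrightarrow> - homogenization G f x" by simp
qed

lemma homogenization_int_pow:
  assumes D: "qm_defect_le G f D" and x: "x \<in> carrier G"
  shows "homogenization G f (x [^] (k::int)) = real_of_int k * homogenization G f x"
proof (cases "k \<ge> 0")
  case True
  then show ?thesis
    using homogenization_nat_pow[OF D x, of "nat k"] int_pow_int[of G x "nat k"] by simp
next
  case False
  then have "x [^] k = inv (x [^] nat (-k))" using x by (metis int_pow_neg_int nat_0_le neg_0_le_iff_le minus_minus nle_le)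
  then show ?thesis
    using homogenization_inv[OF D] homogenization_nat_pow[OF D x, of "nat (-k)"] x False by simp
qed

lemma qm_defect_le_homogenization:
  assumes D: "qm_defect_le G f D"
  shows "qm_defect_le G (homogenization G f) (4 * D)"
  unfolding qm_defect_le_def
proof (intro ballI)
  fix x y assume x: "x \<in> carrier G" and y: "y \<in> carrier G"
  have "\<bar>f x + f y - f (x \<otimes> y)\<bar> \<le> D" using D x y unfolding qm_defect_le_def by blast
  moreover have "\<bar>homogenization G f z - f z\<bar> \<le> D" if "z \<in> {x, y, x \<otimes> y}" for z
    using that x y by (intro homogenization_close[OF D]) auto
  ultimately show "\<bar>homogenization G f x + homogenization G f y - homogenization G f (x \<otimes> y)\<bar> \<le> 4 * D"
    by (smt (verit) insertCI)
qed

lemma homogenization_in_homogeneous_qm: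
  "qm_defect_le G f D \<Longrightarrow> homogenization G f \<in> homogeneous_qm G"
  unfolding homogeneous_qm_def quasimorphism_def
  using qm_defect_le_homogenization homogenization_int_pow unfolding qm_defect_le_def by blast

end

section \<open>Linear independence of quasimorphisms modulo homomorphisms\<close>

lemma identity_matrix_not_factor_through_smaller:
  fixes C :: "nat \<Rightarrow> nat \<Rightarrow> real" and M :: "nat \<Rightarrow> nat \<Rightarrow> real"
  assumes "finite I" "card I < card J"
    and "\<forall>j\<in>J. \<forall>k\<in>J. (\<Sum>i\<in>I. C j i * M i k) = (if j = k then 1 else 0)"
  shows False
  using assms
proof (induction I arbitrary: J C rule: finite_induct)
  case empty
  then obtain j where "j \<in> J" by (metis card.empty card_gt_0_iff ex_in_conv)
  then show ?case using empty by (metis one_neq_zero sum.empty)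
next
  case (insert i0 I)
  have fJ: "finite J" using insert.prems(1) card.infinite by fastforce
  show ?case
  proof (cases "\<forall>j\<in>J. C j i0 = 0")
    case True
    then have "\<forall>j\<in>J. \<forall>k\<in>J. (\<Sum>i\<in>I. C j i * M i k) = (if j = k then 1 else 0)"
      using insert.prems(2) insert.hyps by (simp add: sum.insert)
    moreover have "card I < card J" using insert.prems(1) insert.hyps by simp
    ultimately show False using insert.IH by blast
  next
    case False
    then obtain j0 where j0: "j0 \<in> J" "C j0 i0 \<noteq> 0" by blast
    \<comment> \<open>Gaussian elimination of the column i0 using the row j0.\<close>
    define C' where "C' j i = C j i - (C j i0 / C j0 i0) * C j0 i" for j i
    have "\<forall>j\<in>J - {j0}. \<forall>k\<in>J - {j0}. (\<Sum>i\<in>I. C' j i * M i k) = (if j = k then 1 else 0)"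
    proof (intro ballI)
      fix j k assume j: "j \<in> J - {j0}" and k: "k \<in> J - {j0}"
      have "(\<Sum>i\<in>I. C' j i * M i k) = (\<Sum>i\<in>insert i0 I. C' j i * M i k)"
        using insert.hyps j0 by (simp add: sum.insert C'_def)
      also have "\<dots> = (\<Sum>i\<in>insert i0 I. C j i * M i k)
                       - (C j i0 / C j0 i0) * (\<Sum>i\<in>insert i0 I. C j0 i * M i k)"
        by (simp add: C'_def algebra_simps sum_subtractf sum_distrib_left)
      also have "\<dots> = (if j = k then 1 else 0)"
        using insert.prems(2) j k j0 by auto
      finally show "(\<Sum>i\<in>I. C' j i * M i k) = (if j = k then 1 else 0)" .
    qed
    moreover have "card I < card (J - {j0})" using insert.prems(1) insert.hyps j0 fJ by simp
    ultimately show False using insert.IH by blast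
  qed
qed

lemma not_qm_quotient_finite_dim_if_diagonal_defects:
  fixes G :: "('a, 'b) monoid_scheme" and \<psi> :: "nat \<Rightarrow> 'a \<Rightarrow> real" and p q :: "nat \<Rightarrow> 'a"
  assumes G: "group G"
    and \<psi>: "\<And>j. \<psi> j \<in> homogeneous_qm G"
    and pq: "\<And>k. p k \<in> carrier G" "\<And>k. q k \<in> carrier G"
    and d: "d \<noteq> 0"
    and defect: "\<And>j k. \<psi> j (p k \<otimes>\<^bsub>G\<^esub> q k) - \<psi> j (p k) - \<psi> j (q k) = (if j = k then d else 0)"
  shows "\<not> qm_quotient_finite_dim G"
proof
  assume "qm_quotient_finite_dim G"
  then obtain n s where
    rep: "\<forall>\<phi>\<in>homogeneous_qm G. \<exists>c :: nat \<Rightarrow> real. \<exists>h\<in>real_homs G.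
            \<forall>x\<in>carrier G. \<phi> x = h x + (\<Sum>i<n. c i * s i x)"
    unfolding qm_quotient_finite_dim_def by blast
  have "\<forall>j. \<exists>c h. h \<in> real_homs G \<and> (\<forall>x\<in>carrier G. \<psi> j x = h x + (\<Sum>i<n. c i * s i x))"
    using rep \<psi> by blast
  then obtain c h where h: "\<And>j. h j \<in> real_homs G"
      and ch: "\<And>j x. x \<in> carrier G \<Longrightarrow> \<psi> j x = h j x + (\<Sum>i<n. c j i * s i x)"
    by metis
  define M where "M i k = s i (p k \<otimes>\<^bsub>G\<^esub> q k) - s i (p k) - s i (q k)" for i k
  have "p k \<otimes>\<^bsub>G\<^esub> q k \<in> carrier G" for k
    using G pq by (simp add: group.is_monoid monoid.m_closed)
  then have "\<psi> j (p k \<otimes>\<^bsub>G\<^esub> q k) - \<psi> j (p k) - \<psi> j (q k) = (\<Sum>i<n. c j i * M i k)" for j k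
    using ch[of "p k \<otimes>\<^bsub>G\<^esub> q k" j] ch[OF pq(1), of j] ch[OF pq(2), of j] h[of j] pq
    unfolding real_homs_def
    by (simp add: M_def algebra_simps sum_subtractf sum_distrib_left sum.distrib)
  then have "(\<Sum>i\<in>{..<n}. (c j i / d) * M i k) = (if j = k then 1 else 0)" for j k
    using defect[of j k] d by (simp add: sum_divide_distrib[symmetric])
  then show False
    using identity_matrix_not_factor_through_smaller[of "{..<n}" "{..n}" "\<lambda>j i. c j i / d" M] by simp
qed

lemma homogeneous_qm_one:
  assumes "group G" and "\<phi> \<in> homogeneous_qm G"
  shows "\<phi> \<one>\<^bsub>G\<^esub> = 0"
proof -
  have "\<phi> (\<one>\<^bsub>G\<^esub> [^]\<^bsub>G\<^esub> (0::int)) = of_int 0 * \<phi> \<one>\<^bsub>G\<^esub>"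
    using assms group.is_monoid monoid.one_closed unfolding homogeneous_qm_def by blast
  then show ?thesis by simp
qed

lemma homogeneous_qm_comp_hom:
  assumes "group G" "group H" "h \<in> hom G H" and \<phi>: "\<phi> \<in> homogeneous_qm H"
  shows "\<phi> \<circ> h \<in> homogeneous_qm G"
proof -
  interpret group_hom G H h
    using assms by (simp add: group_hom_def group_hom_axioms_def)
  obtain D where "\<forall>x\<in>carrier H. \<forall>y\<in>carrier H. \<bar>\<phi> x + \<phi> y - \<phi> (x \<otimes>\<^bsub>H\<^esub> y)\<bar> \<le> D"
    using \<phi> unfolding homogeneous_qm_def quasimorphism_def by blast
  then have "\<forall>x\<in>carrier G. \<forall>y\<in>carrier G. \<bar>\<phi> (h x) + \<phi> (h y) - \<phi> (h (x \<otimes>\<^bsub>G\<^esub> y))\<bar> \<le> D"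
    by simp
  moreover have "\<forall>x\<in>carrier G. \<forall>n::int. \<phi> (h (x [^]\<^bsub>G\<^esub> n)) = of_int n * \<phi> (h x)"
    using \<phi> unfolding homogeneous_qm_def by (simp add: hom_int_pow)
  ultimately show ?thesis
    unfolding homogeneous_qm_def quasimorphism_def by auto
qed

section \<open>Restricted direct powers\<close>

definition restricted_power :: "('a, 'b) monoid_scheme \<Rightarrow> (nat \<Rightarrow> 'a) monoid" where
  "restricted_power H =
     \<lparr> carrier = {u. (\<forall>i. u i \<in> carrier H) \<and> finite {i. u i \<noteq> \<one>\<^bsub>H\<^esub>}},
       monoid.mult = (\<lambda>u v i. u i \<otimes>\<^bsub>H\<^esub> v i),
       one = (\<lambda>i. \<one>\<^bsub>H\<^esub>) \<rparr>"

lemma restricted_power_carrier: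
  "u \<in> carrier (restricted_power H) \<longleftrightarrow> (\<forall>i. u i \<in> carrier H) \<and> finite {i. u i \<noteq> \<one>\<^bsub>H\<^esub>}"
  by (simp add: restricted_power_def)

lemma restricted_power_mult: "(u \<otimes>\<^bsub>restricted_power H\<^esub> v) i = u i \<otimes>\<^bsub>H\<^esub> v i"
  by (simp add: restricted_power_def)

lemma restricted_power_one: "\<one>\<^bsub>restricted_power H\<^esub> i = \<one>\<^bsub>H\<^esub>"
  by (simp add: restricted_power_def)

lemma group_restricted_power:
  assumes "group H"
  shows "group (restricted_power H)"
proof -
  interpret H: group H by fact
  let ?P = "restricted_power H"
  show ?thesis
  proof (rule groupI)
    show "x \<otimes>\<^bsub>?P\<^esub> y \<in> carrier ?P" if "x \<in> carrier ?P" "y \<in> carrier ?P" for x y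
    proof -
      have "{i. x i \<otimes>\<^bsub>H\<^esub> y i \<noteq> \<one>\<^bsub>H\<^esub>} \<subseteq> {i. x i \<noteq> \<one>\<^bsub>H\<^esub>} \<union> {i. y i \<noteq> \<one>\<^bsub>H\<^esub>}"
        by auto
      then show ?thesis
        using that by (auto simp: restricted_power_carrier restricted_power_mult intro: finite_subset)
    qed
    show "\<one>\<^bsub>?P\<^esub> \<in> carrier ?P"
      by (simp add: restricted_power_def)
    show "x \<otimes>\<^bsub>?P\<^esub> y \<otimes>\<^bsub>?P\<^esub> z = x \<otimes>\<^bsub>?P\<^esub> (y \<otimes>\<^bsub>?P\<^esub> z)"
      if "x \<in> carrier ?P" "y \<in> carrier ?P" "z \<in> carrier ?P" for x y z
      using that by (auto simp: restricted_power_def H.m_assoc)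
    show "\<one>\<^bsub>?P\<^esub> \<otimes>\<^bsub>?P\<^esub> x = x" if "x \<in> carrier ?P" for x
      using that by (auto simp: restricted_power_def)
    show "\<exists>y\<in>carrier ?P. y \<otimes>\<^bsub>?P\<^esub> x = \<one>\<^bsub>?P\<^esub>" if "x \<in> carrier ?P" for x
    proof
      have "{i. inv\<^bsub>H\<^esub> x i \<noteq> \<one>\<^bsub>H\<^esub>} = {i. x i \<noteq> \<one>\<^bsub>H\<^esub>}"
        using that by (auto simp: restricted_power_carrier)
      then show "(\<lambda>i. inv\<^bsub>H\<^esub> x i) \<in> carrier ?P"
        using that by (auto simp: restricted_power_carrier)
      show "(\<lambda>i. inv\<^bsub>H\<^esub> x i) \<otimes>\<^bsub>?P\<^esub> x = \<one>\<^bsub>?P\<^esub>"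
        using that by (auto simp: restricted_power_def)
    qed
  qed
qed

lemma restricted_power_nat_pow: "(u [^]\<^bsub>restricted_power H\<^esub> (n::nat)) i = u i [^]\<^bsub>H\<^esub> n"
  by (induction n) (simp_all only: nat_pow_0 nat_pow_Suc restricted_power_one restricted_power_mult)

lemma restricted_power_proj_hom:
  "group H \<Longrightarrow> (\<lambda>u. u j) \<in> hom (restricted_power H) H"
  by (auto simp: hom_def restricted_power_carrier restricted_power_mult)

lemma divisible_restricted_power:
  assumes "group H" and "divisible_group H"
  shows "divisible_group (restricted_power H)"
  unfolding divisible_group_def
proof (intro ballI allI impI)
  interpret H: group H by fact
  fix u and n :: nat assume u: "u \<in> carrier (restricted_power H)" and n: "n \<ge> 1"
  \<comment> \<open>Roots are chosen coordinatewise, with the root 1 of 1 to keep the support finite.\<close>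
  define r where "r i = (if u i = \<one>\<^bsub>H\<^esub> then \<one>\<^bsub>H\<^esub> else (SOME y. y \<in> carrier H \<and> y [^]\<^bsub>H\<^esub> n = u i))" for i
  have r: "r i \<in> carrier H \<and> r i [^]\<^bsub>H\<^esub> n = u i" for i
  proof (cases "u i = \<one>\<^bsub>H\<^esub>")
    case True
    then show ?thesis by (simp add: r_def)
  next
    case False
    have "\<exists>y. y \<in> carrier H \<and> y [^]\<^bsub>H\<^esub> n = u i"
      using assms(2) u n unfolding divisible_group_def restricted_power_carrier by blast
    from someI_ex[OF this] show ?thesis using False unfolding r_def by simp
  qed
  show "\<exists>y\<in>carrier (restricted_power H). y [^]\<^bsub>restricted_power H\<^esub> n = u"
  proof
    have "{i. r i \<noteq> \<one>\<^bsub>H\<^esub>} \<subseteq> {i. u i \<noteq> \<one>\<^bsub>H\<^esub>}" by (auto simp: r_def)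
    then show "r \<in> carrier (restricted_power H)"
      using u r by (auto simp: restricted_power_carrier intro: finite_subset)
    show "r [^]\<^bsub>restricted_power H\<^esub> n = u"
      using r by (auto simp: restricted_power_nat_pow)
  qed
qed

definition single_coord :: "('a, 'b) monoid_scheme \<Rightarrow> nat \<Rightarrow> 'a \<Rightarrow> nat \<Rightarrow> 'a" where
  "single_coord H k h = (\<lambda>i. if i = k then h else \<one>\<^bsub>H\<^esub>)"

lemma single_coord_in_carrier:
  "group H \<Longrightarrow> h \<in> carrier H \<Longrightarrow> single_coord H k h \<in> carrier (restricted_power H)"
  by (auto simp: single_coord_def restricted_power_carrier group.is_monoid monoid.one_closed)

lemma single_coord_mult:
  "group H \<Longrightarrow> single_coord H k h \<otimes>\<^bsub>restricted_power H\<^esub> single_coord H k h'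
     = single_coord H k (h \<otimes>\<^bsub>H\<^esub> h')"
  by (auto simp: single_coord_def restricted_power_mult group.is_monoid monoid.l_one)

lemma countable_divisible_subgroup:
  fixes U :: "('a, 'b) monoid_scheme" (structure)
  assumes "group U" and "divisible_group U" and X0: "countable X0" "X0 \<subseteq> carrier U"
  shows "\<exists>S. subgroup S U \<and> countable S \<and> X0 \<subseteq> S
           \<and> (\<forall>x\<in>S. \<forall>n::nat. n \<ge> 1 \<longrightarrow> (\<exists>y\<in>S. y [^] n = x))"
proof -
  interpret U: group U by fact
  have "\<forall>x\<in>carrier U. \<forall>n. \<exists>y. y \<in> carrier U \<and> y [^] Suc n = x"
    using assms(2) unfolding divisible_group_def by (metis Suc_le_mono zero_le One_nat_def)
  then obtain rt where rt: "\<And>x n. x \<in> carrier U \<Longrightarrow> rt x n \<in> carrier U \<and> rt x n [^] Suc n = x"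
    by metis
  define step where "step T = T \<union> {\<one>} \<union> (\<lambda>(a, b). a \<otimes> b) ` (T \<times> T) \<union> (\<lambda>a. inv a) ` T
      \<union> (\<lambda>(a, n). rt a n) ` (T \<times> UNIV)" for T
  define Sk where "Sk k = (step ^^ k) X0" for k
  define S where "S = (\<Union>k. Sk k)"
  have Sk_Suc: "Sk (Suc k) = step (Sk k)" for k
    by (simp add: Sk_def)
  have "countable (Sk k)" for k
    by (induction k) (auto simp: Sk_def X0 step_def)
  then have "countable S" by (simp add: S_def)
  have Sk_carrier: "Sk k \<subseteq> carrier U" for k
    by (induction k) (use X0 rt in \<open>auto simp: Sk_def step_def\<close>)
  have "mono Sk"
    by (rule incseq_SucI) (auto simp: Sk_Suc step_def)
  have closed: "x \<otimes> y \<in> S \<and> inv x \<in> S \<and> rt x n \<in> S" if xy: "x \<in> S" "y \<in> S" for x y n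
  proof -
    obtain i j where "x \<in> Sk i" "y \<in> Sk j" using xy unfolding S_def by blast
    then have "x \<in> Sk (max i j)" "y \<in> Sk (max i j)"
      using monoD[OF \<open>mono Sk\<close>, of i "max i j"] monoD[OF \<open>mono Sk\<close>, of j "max i j"] by auto
    then have "x \<otimes> y \<in> Sk (Suc (max i j)) \<and> inv x \<in> Sk (Suc (max i j)) \<and> rt x n \<in> Sk (Suc (max i j))"
      unfolding Sk_Suc step_def by (blast intro: rev_image_eqI)
    then show ?thesis by (auto simp: S_def)
  qed
  have "subgroup S U"
  proof
    show "S \<subseteq> carrier U" using Sk_carrier by (auto simp: S_def)
    show "\<one> \<in> S" by (auto simp: S_def Sk_Suc step_def intro!: exI[of _ "Suc 0"])
  qed (use closed in blast)+
  moreover have "\<exists>y\<in>S. y [^] n = x" if "x \<in> S" "n \<ge> 1" for x and n :: nat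
    using closed[OF that(1) that(1), of "n - 1"] rt[of x "n - 1"] Sk_carrier that
    by (auto simp: S_def)
  moreover have "X0 \<subseteq> S" by (auto simp: S_def Sk_def intro!: exI[of _ 0])
  ultimately show ?thesis using \<open>countable S\<close> by blast
qed

lemma countable_subgroup_iso_nat_group:
  fixes U :: "('a, 'b) monoid_scheme" (structure)
  assumes "group U" and S: "subgroup S U" "countable S"
  shows "\<exists>(G :: nat monoid) f. group G \<and> f \<in> hom G U \<and> f ` carrier G = S \<and> inj_on f (carrier G)"
proof -
  interpret U: group U by fact
  interpret S: subgroup S U by fact
  obtain e :: "'a \<Rightarrow> nat" where e: "inj_on e S" using S(2) by (meson countableE)
  define f where "f = inv_into S e"
  have f_e: "x \<in> S \<Longrightarrow> f (e x) = x" for x using e by (simp add: f_def)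
  have fS: "a \<in> e ` S \<Longrightarrow> f a \<in> S" for a using f_e by auto
  define G :: "nat monoid" where
    "G = \<lparr> carrier = e ` S, monoid.mult = (\<lambda>a b. e (f a \<otimes> f b)), one = e \<one> \<rparr>"
  have "group G"
  proof (rule groupI)
    show "x \<otimes>\<^bsub>G\<^esub> y \<in> carrier G" if "x \<in> carrier G" "y \<in> carrier G" for x y
      using that fS by (auto simp: G_def)
    show "\<one>\<^bsub>G\<^esub> \<in> carrier G" by (simp add: G_def)
    show "x \<otimes>\<^bsub>G\<^esub> y \<otimes>\<^bsub>G\<^esub> z = x \<otimes>\<^bsub>G\<^esub> (y \<otimes>\<^bsub>G\<^esub> z)"
      if "x \<in> carrier G" "y \<in> carrier G" "z \<in> carrier G" for x y z
      using that fS by (simp add: G_def f_e U.m_assoc subsetD)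
    show "\<one>\<^bsub>G\<^esub> \<otimes>\<^bsub>G\<^esub> x = x" if "x \<in> carrier G" for x
      using that by (auto simp: G_def f_e subsetD)
    show "\<exists>y\<in>carrier G. y \<otimes>\<^bsub>G\<^esub> x = \<one>\<^bsub>G\<^esub>" if x: "x \<in> carrier G" for x
    proof -
      obtain s where s: "s \<in> S" "x = e s" using x by (auto simp: G_def)
      then have "e (inv s) \<in> carrier G \<and> e (inv s) \<otimes>\<^bsub>G\<^esub> x = \<one>\<^bsub>G\<^esub>"
        by (auto simp: G_def f_e subsetD)
      then show ?thesis by blast
    qed
  qed
  moreover have "f \<in> hom G U"
    unfolding hom_def using fS by (auto simp: G_def f_e subsetD)
  moreover have "f ` carrier G = S" using f_e by (force simp: G_def)
  moreover have "inj_on f (carrier G)" using f_e by (auto simp: G_def intro: inj_onI)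
  ultimately show ?thesis by blast
qed

lemma countable_divisible_group_embedding:
  fixes U :: "('a, 'b) monoid_scheme" (structure)
  assumes U: "group U" "divisible_group U" and X0: "countable X0" "X0 \<subseteq> carrier U"
  shows "\<exists>(G :: nat monoid) f. group G \<and> divisible_group G \<and> f \<in> hom G U
           \<and> inj_on f (carrier G) \<and> X0 \<subseteq> f ` carrier G"
proof -
  obtain S where S: "subgroup S U" "countable S" "X0 \<subseteq> S"
    and roots: "\<forall>x\<in>S. \<forall>n::nat. n \<ge> 1 \<longrightarrow> (\<exists>y\<in>S. y [^] n = x)"
    using countable_divisible_subgroup[OF U X0] by blast
  obtain G :: "nat monoid" and f where G: "group G" and hom: "f \<in> hom G U"
    and img: "f ` carrier G = S" and inj: "inj_on f (carrier G)"
    using countable_subgroup_iso_nat_group[OF U(1) S(1,2)] by blast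
  interpret G: group G by (rule G)
  interpret group_hom G U f
    using G U hom by (simp add: group_hom_def group_hom_axioms_def)
  have "divisible_group G"
    unfolding divisible_group_def
  proof (intro ballI allI impI)
    fix h and n :: nat assume h: "h \<in> carrier G" and n: "n \<ge> 1"
    obtain y where "y \<in> S" "y [^] n = f h" using roots n h img by blast
    then obtain a where a: "a \<in> carrier G" "f (a [^]\<^bsub>G\<^esub> n) = f h"
      using img hom_nat_pow by auto
    then have "a [^]\<^bsub>G\<^esub> n = h" using inj h by (meson G.nat_pow_closed inj_onD)
    then show "\<exists>y\<in>carrier G. y [^]\<^bsub>G\<^esub> n = h" using a by blast
  qed
  then show ?thesis using G hom inj img S(3) by blast
qed

text \<open>The quasimorphisms \<phi> \<circ> pr_j are linearly independent modulo homomorphisms: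
  their defects on the pairs (x, y) placed in coordinate k form a nonzero multiple of the
  identity matrix.\<close>

lemma countable_divisible_group_infinite_dim_qm:
  fixes H :: "('a, 'b) monoid_scheme" (structure)
  assumes H: "group H" "divisible_group H" and \<phi>: "\<phi> \<in> homogeneous_qm H"
    and xy: "x \<in> carrier H" "y \<in> carrier H" "\<phi> (x \<otimes> y) \<noteq> \<phi> x + \<phi> y"
  shows "\<exists>G :: nat monoid. group G \<and> countable (carrier G) \<and> divisible_group G
           \<and> \<not> qm_quotient_finite_dim G"
proof -
  let ?U = "restricted_power H"
  let ?x = "\<lambda>k. single_coord H k x" and ?y = "\<lambda>k. single_coord H k y"
  have U: "group ?U" "divisible_group ?U"
    using group_restricted_power divisible_restricted_power H by blast+
  have "countable (range ?x \<union> range ?y)" "range ?x \<union> range ?y \<subseteq> carrier ?U"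
    using single_coord_in_carrier H(1) xy by auto
  then obtain G :: "nat monoid" and f where G: "group G" "divisible_group G"
    and hom: "f \<in> hom G ?U" and inj: "inj_on f (carrier G)"
    and img: "range ?x \<union> range ?y \<subseteq> f ` carrier G"
    using countable_divisible_group_embedding[OF U] by blast
  define \<psi> where "\<psi> j = \<phi> \<circ> ((\<lambda>u. u j) \<circ> f)" for j
  have \<psi>: "\<psi> j \<in> homogeneous_qm G" for j
    unfolding \<psi>_def
    by (intro homogeneous_qm_comp_hom[OF G(1) H(1) _ \<phi>] hom_compose[OF hom]
        restricted_power_proj_hom H(1))
  define p where "p k = inv_into (carrier G) f (?x k)" for k
  define q where "q k = inv_into (carrier G) f (?y k)" for k
  have p: "p k \<in> carrier G" "f (p k) = ?x k" and q: "q k \<in> carrier G" "f (q k) = ?y k" for k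
  proof -
    have "?x k \<in> f ` carrier G" "?y k \<in> f ` carrier G" using img by auto
    then show "p k \<in> carrier G" "f (p k) = ?x k" "q k \<in> carrier G" "f (q k) = ?y k"
      by (simp_all add: p_def q_def inv_into_into f_inv_into_f)
  qed
  have "f (p k \<otimes>\<^bsub>G\<^esub> q k) = single_coord H k (x \<otimes> y)" for k
    using p q hom single_coord_mult[OF H(1)] by (simp add: hom_mult)
  then have defect: "\<psi> j (p k \<otimes>\<^bsub>G\<^esub> q k) - \<psi> j (p k) - \<psi> j (q k)
      = (if j = k then \<phi> (x \<otimes> y) - \<phi> x - \<phi> y else 0)" for j k
    using homogeneous_qm_one[OF H(1) \<phi>] p q by (simp add: \<psi>_def single_coord_def)
  have "\<not> qm_quotient_finite_dim G"
    by (rule not_qm_quotient_finite_dim_if_diagonal_defects[OF G(1) \<psi> p(1) q(1) _ defect])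
      (use xy(3) in simp)
  then show ?thesis using G by blast
qed

section \<open>A central extension of PSL2(R) by R\<close>

text \<open>A quadruple (a, b, c, d) stands for the matrix [[a, b], [c, d]].\<close>

type_synonym m2 = "real \<times> real \<times> real \<times> real"

fun mmul :: "m2 \<Rightarrow> m2 \<Rightarrow> m2" where
  "mmul (a1, b1, c1, d1) (a2, b2, c2, d2) =
     (a1 * a2 + b1 * c2, a1 * b2 + b1 * d2, c1 * a2 + d1 * c2, c1 * b2 + d1 * d2)"

fun det2 :: "m2 \<Rightarrow> real" where
  "det2 (a, b, c, d) = a * d - b * c"

fun tr2 :: "m2 \<Rightarrow> real" where
  "tr2 (a, b, c, d) = a + d"

fun mneg :: "m2 \<Rightarrow> m2" where
  "mneg (a, b, c, d) = (-a, -b, -c, -d)"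

fun mscale :: "real \<Rightarrow> m2 \<Rightarrow> m2" where
  "mscale k (a, b, c, d) = (k * a, k * b, k * c, k * d)"

definition mI :: m2 where
  "mI = (1, 0, 0, 1)"

fun pm_rep :: "m2 \<Rightarrow> m2" where
  "pm_rep (a, b, c, d) = (if 0 < a \<or> (a = 0 \<and> 0 < b) then (a, b, c, d) else (-a, -b, -c, -d))"

text \<open>The Cayley transform conjugates SL2(R) onto SU(1,1), whose elements are the matrices
  [[\<alpha>, \<beta>], [cnj \<beta>, cnj \<alpha>]] with |\<alpha>|^2 - |\<beta>|^2 = 1; su_alpha A and su_beta A are the
  entries \<alpha> and \<beta> of the image of A.\<close>

fun su_alpha :: "m2 \<Rightarrow> complex" where
  "su_alpha (a, b, c, d) = Complex ((a + d) / 2) ((c - b) / 2)"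

fun su_beta :: "m2 \<Rightarrow> complex" where
  "su_beta (a, b, c, d) = Complex ((a - d) / 2) ((b + c) / 2)"

definition arg_cocycle :: "m2 \<Rightarrow> m2 \<Rightarrow> real" where
  "arg_cocycle A B = Arg (su_alpha (mmul A B) / (su_alpha A * su_alpha B))"

lemma mmul_assoc: "mmul (mmul A B) C = mmul A (mmul B C)"
  by (cases A; cases B; cases C) (simp add: algebra_simps)

lemma det2_mmul: "det2 (mmul A B) = det2 A * det2 B"
  by (cases A; cases B) (simp add: algebra_simps)

lemma mmul_mneg_left: "mmul (mneg A) B = mneg (mmul A B)"
  by (cases A; cases B) simp

lemma mmul_mneg_right: "mmul A (mneg B) = mneg (mmul A B)"
  by (cases A; cases B) simp

lemma mneg_mneg [simp]: "mneg (mneg A) = A"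
  by (cases A) simp

lemma det2_mneg [simp]: "det2 (mneg A) = det2 A"
  by (cases A) simp

lemma mmul_mI_left [simp]: "mmul mI A = A"
  by (cases A) (simp add: mI_def)

lemma det2_mI [simp]: "det2 mI = 1"
  by (simp add: mI_def)

lemma pm_rep_mI [simp]: "pm_rep mI = mI"
  by (simp add: mI_def)

lemma pm_rep_cases: "pm_rep A = A \<or> pm_rep A = mneg A"
  by (cases A) auto

lemma det2_pm_rep [simp]: "det2 (pm_rep A) = det2 A"
  using pm_rep_cases[of A] by auto

lemma pm_rep_mneg: "det2 A = 1 \<Longrightarrow> pm_rep (mneg A) = pm_rep A"
  by (cases A) (auto simp: not_less)

lemma pm_rep_pm_rep: "det2 A = 1 \<Longrightarrow> pm_rep (pm_rep A) = pm_rep A"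
  using pm_rep_cases[of A] pm_rep_mneg[of A] by (metis det2_mneg mneg_mneg)

lemma pm_rep_mmul_left:
  "det2 A = 1 \<Longrightarrow> det2 B = 1 \<Longrightarrow> pm_rep (mmul (pm_rep A) B) = pm_rep (mmul A B)"
  using pm_rep_cases[of A] pm_rep_mneg[of "mmul A B"] by (auto simp: mmul_mneg_left det2_mmul)

lemma pm_rep_mmul_right:
  "det2 A = 1 \<Longrightarrow> det2 B = 1 \<Longrightarrow> pm_rep (mmul A (pm_rep B)) = pm_rep (mmul A B)"
  using pm_rep_cases[of B] pm_rep_mneg[of "mmul A B"] by (auto simp: mmul_mneg_right det2_mmul)

lemma su_alpha_mneg [simp]: "su_alpha (mneg A) = - su_alpha A"
  by (cases A) (auto simp: complex_eq_iff field_simps)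

lemma su_alpha_mI [simp]: "su_alpha mI = 1"
  by (simp add: mI_def complex_eq_iff)

lemma su_alpha_mmul: "su_alpha (mmul A B) = su_alpha A * su_alpha B + su_beta A * cnj (su_beta B)"
  by (cases A; cases B) (simp add: complex_eq_iff field_simps)

lemma norm_su_alpha_squared: "det2 A = 1 \<Longrightarrow> (cmod (su_alpha A))\<^sup>2 = (cmod (su_beta A))\<^sup>2 + 1"
  unfolding cmod_power2 by (cases A) (simp add: field_simps power2_eq_square)

lemma su_alpha_nonzero: "det2 A = 1 \<Longrightarrow> su_alpha A \<noteq> 0"
proof
  assume "det2 A = 1" "su_alpha A = 0"
  then show False using norm_su_alpha_squared[of A] by (smt (verit) norm_zero power_zero_numeral zero_le_power2)
qed

lemma norm_su_beta_less:
  assumes "det2 A = 1"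
  shows "cmod (su_beta A) < cmod (su_alpha A)"
proof -
  have "(cmod (su_beta A))\<^sup>2 < (cmod (su_alpha A))\<^sup>2" using norm_su_alpha_squared[OF assms] by simp
  then show ?thesis by (simp add: power_less_imp_less_base)
qed

lemma Re_su_alpha_quotient_pos:
  assumes A: "det2 A = 1" and B: "det2 B = 1"
  shows "Re (su_alpha (mmul A B) / (su_alpha A * su_alpha B)) > 0"
proof -
  let ?a = "su_alpha A * su_alpha B"
  have nz: "?a \<noteq> 0" using su_alpha_nonzero[OF A] su_alpha_nonzero[OF B] by simp
  define u where "u = su_beta A * cnj (su_beta B) / ?a"
  have eq: "su_alpha (mmul A B) / ?a = 1 + u" using nz by (simp add: su_alpha_mmul u_def field_simps)
  have "cmod (su_beta A) * cmod (su_beta B) < cmod (su_alpha A) * cmod (su_alpha B)"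
    using norm_su_beta_less[OF A] norm_su_beta_less[OF B] by (simp add: mult_strict_mono')
  then have "cmod u < 1"
    using nz by (simp add: u_def norm_mult norm_divide)
  moreover have "- cmod u \<le> Re u" using abs_Re_le_cmod[of u] by linarith
  ultimately show ?thesis using eq by simp
qed

lemma abs_arg_cocycle_less: "det2 A = 1 \<Longrightarrow> det2 B = 1 \<Longrightarrow> \<bar>arg_cocycle A B\<bar> < pi / 2"
  unfolding arg_cocycle_def using Arg_Re_pos Re_su_alpha_quotient_pos by blast

lemma arg_cocycle_mneg_left [simp]: "arg_cocycle (mneg A) B = arg_cocycle A B"
  by (simp add: arg_cocycle_def mmul_mneg_left)

lemma arg_cocycle_mneg_right [simp]: "arg_cocycle A (mneg B) = arg_cocycle A B"
  by (simp add: arg_cocycle_def mmul_mneg_right)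

lemma arg_cocycle_pm_rep_left [simp]: "arg_cocycle (pm_rep A) B = arg_cocycle A B"
  using pm_rep_cases[of A] by auto

lemma arg_cocycle_pm_rep_right [simp]: "arg_cocycle A (pm_rep B) = arg_cocycle A B"
  using pm_rep_cases[of B] by auto

lemma arg_cocycle_mI_left [simp]: "det2 A = 1 \<Longrightarrow> arg_cocycle mI A = 0"
  using su_alpha_nonzero[of A] by (simp add: arg_cocycle_def)

lemma arg_cocycle_identity:
  assumes A: "det2 A = 1" and B: "det2 B = 1" and C: "det2 C = 1"
  shows "arg_cocycle A B + arg_cocycle (mmul A B) C = arg_cocycle B C + arg_cocycle A (mmul B C)"
proof -
  have AB: "det2 (mmul A B) = 1" and BC: "det2 (mmul B C) = 1"
    using A B C by (simp_all add: det2_mmul)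
  let ?q = "\<lambda>M N. su_alpha (mmul M N) / (su_alpha M * su_alpha N)"
  have q: "\<bar>Arg (?q M N)\<bar> < pi / 2" "?q M N \<noteq> 0" if "det2 M = 1" "det2 N = 1" for M N
    using Arg_Re_pos Re_su_alpha_quotient_pos[OF that] by force+
  have "?q A B * ?q (mmul A B) C = ?q B C * ?q A (mmul B C)"
    using su_alpha_nonzero A B C AB BC by (simp add: mmul_assoc field_simps)
  moreover have "Arg (?q A B * ?q (mmul A B) C) = Arg (?q A B) + Arg (?q (mmul A B) C)"
    using q[OF A B] q[OF AB C] by (intro Arg_times) auto
  moreover have "Arg (?q B C * ?q A (mmul B C)) = Arg (?q B C) + Arg (?q A (mmul B C))"
    using q[OF B C] q[OF A BC] by (intro Arg_times) auto
  ultimately show ?thesis by (simp add: arg_cocycle_def)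
qed

text \<open>Elements of PSL2(R) are represented by the matrices A with det A = 1 and pm_rep A = A.\<close>

definition PSL2_ext :: "(m2 \<times> real) monoid" where
  "PSL2_ext = \<lparr> carrier = {x. det2 (fst x) = 1 \<and> pm_rep (fst x) = fst x},
     monoid.mult = (\<lambda>x y. (pm_rep (mmul (fst x) (fst y)), snd x + snd y + arg_cocycle (fst x) (fst y))),
     one = (mI, 0) \<rparr>"

lemma PSL2_ext_carrier: "x \<in> carrier PSL2_ext \<longleftrightarrow> det2 (fst x) = 1 \<and> pm_rep (fst x) = fst x"
  by (simp add: PSL2_ext_def)

lemma PSL2_ext_mult:
  "x \<otimes>\<^bsub>PSL2_ext\<^esub> y = (pm_rep (mmul (fst x) (fst y)), snd x + snd y + arg_cocycle (fst x) (fst y))"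
  by (simp add: PSL2_ext_def)

lemma PSL2_ext_one: "\<one>\<^bsub>PSL2_ext\<^esub> = (mI, 0)"
  by (simp add: PSL2_ext_def)

fun madj :: "m2 \<Rightarrow> m2" where
  "madj (a, b, c, d) = (d, -b, -c, a)"

lemma mmul_madj: "det2 A = 1 \<Longrightarrow> mmul (madj A) A = mI"
  by (cases A) (simp add: mI_def algebra_simps)

lemma det2_madj [simp]: "det2 (madj A) = det2 A"
  by (cases A) (simp add: algebra_simps)

lemma group_PSL2_ext: "group PSL2_ext"
proof (rule groupI)
  show "x \<otimes>\<^bsub>PSL2_ext\<^esub> y \<in> carrier PSL2_ext"
    if "x \<in> carrier PSL2_ext" "y \<in> carrier PSL2_ext" for x y
    using that by (simp add: PSL2_ext_carrier PSL2_ext_mult det2_mmul pm_rep_pm_rep)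
  show "\<one>\<^bsub>PSL2_ext\<^esub> \<in> carrier PSL2_ext"
    by (simp add: PSL2_ext_carrier PSL2_ext_one)
  show "x \<otimes>\<^bsub>PSL2_ext\<^esub> y \<otimes>\<^bsub>PSL2_ext\<^esub> z = x \<otimes>\<^bsub>PSL2_ext\<^esub> (y \<otimes>\<^bsub>PSL2_ext\<^esub> z)"
    if "x \<in> carrier PSL2_ext" "y \<in> carrier PSL2_ext" "z \<in> carrier PSL2_ext" for x y z
  proof -
    have d: "det2 (fst x) = 1" "det2 (fst y) = 1" "det2 (fst z) = 1"
      using that by (auto simp: PSL2_ext_carrier)
    then show ?thesis
      using arg_cocycle_identity[OF d]
      by (simp add: PSL2_ext_mult pm_rep_mmul_left pm_rep_mmul_right det2_mmul mmul_assoc algebra_simps)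
  qed
  show "\<one>\<^bsub>PSL2_ext\<^esub> \<otimes>\<^bsub>PSL2_ext\<^esub> x = x" if "x \<in> carrier PSL2_ext" for x
    using that by (cases x) (simp add: PSL2_ext_carrier PSL2_ext_mult PSL2_ext_one)
  show "\<exists>y\<in>carrier PSL2_ext. y \<otimes>\<^bsub>PSL2_ext\<^esub> x = \<one>\<^bsub>PSL2_ext\<^esub>" if "x \<in> carrier PSL2_ext" for x
  proof
    have d: "det2 (fst x) = 1" using that by (simp add: PSL2_ext_carrier)
    let ?y = "(pm_rep (madj (fst x)), - snd x - arg_cocycle (madj (fst x)) (fst x))"
    show "?y \<in> carrier PSL2_ext"
      using d by (simp add: PSL2_ext_carrier pm_rep_pm_rep)
    show "?y \<otimes>\<^bsub>PSL2_ext\<^esub> x = \<one>\<^bsub>PSL2_ext\<^esub>"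
      using d by (simp add: PSL2_ext_mult PSL2_ext_one pm_rep_mmul_left mmul_madj)
  qed
qed

lemma qm_defect_le_PSL2_ext_snd: "qm_defect_le PSL2_ext snd (pi / 2)"
  unfolding qm_defect_le_def
proof (intro ballI)
  fix x y assume "x \<in> carrier PSL2_ext" "y \<in> carrier PSL2_ext"
  then have "\<bar>arg_cocycle (fst x) (fst y)\<bar> < pi / 2"
    by (intro abs_arg_cocycle_less) (auto simp: PSL2_ext_carrier)
  then show "\<bar>snd x + snd y - snd (x \<otimes>\<^bsub>PSL2_ext\<^esub> y)\<bar> \<le> pi / 2"
    by (simp add: PSL2_ext_mult)
qed

section \<open>Divisibility of the extension\<close>

fun mpow :: "m2 \<Rightarrow> nat \<Rightarrow> m2" where
  "mpow M 0 = mI"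
| "mpow M (Suc n) = mmul (mpow M n) M"

lemma det2_mpow: "det2 M = 1 \<Longrightarrow> det2 (mpow M n) = 1"
  by (induction n) (auto simp: det2_mmul)

lemma mpow_mneg: "mpow (mneg M) n = mpow M n \<or> mpow (mneg M) n = mneg (mpow M n)"
  by (induction n) (auto simp: mmul_mneg_left mmul_mneg_right)

lemma pm_rep_mpow_pm_rep: "det2 M = 1 \<Longrightarrow> pm_rep (mpow (pm_rep M) n) = pm_rep (mpow M n)"
  using pm_rep_cases[of M] mpow_mneg[of M n] pm_rep_mneg[OF det2_mpow[of M n]] by auto

lemma PSL2_ext_nat_pow:
  "x [^]\<^bsub>PSL2_ext\<^esub> (n::nat)
     = (fst ((fst x, 0) [^]\<^bsub>PSL2_ext\<^esub> n), real n * snd x + snd ((fst x, 0::real) [^]\<^bsub>PSL2_ext\<^esub> n))"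
proof (induction n)
  case 0
  then show ?case by (simp add: PSL2_ext_one)
next
  case (Suc n)
  show ?case
    by (simp only: nat_pow_Suc Suc.IH) (simp add: PSL2_ext_mult algebra_simps)
qed

lemma fst_PSL2_ext_nat_pow: "det2 M = 1 \<Longrightarrow> fst ((M, t) [^]\<^bsub>PSL2_ext\<^esub> n) = pm_rep (mpow M n)"
  by (induction n) (simp_all add: PSL2_ext_one nat_pow_Suc PSL2_ext_mult pm_rep_mmul_left det2_mpow)

text \<open>The matrix x I + y N. For tr N = 0 we have N^2 = - det N I, so these matrices multiply
  like the numbers x + y \<surd>(- det N).\<close>

fun mcomb :: "m2 \<Rightarrow> real \<Rightarrow> real \<Rightarrow> m2" where
  "mcomb (a, b, c, d) x y = (x + y * a, y * b, y * c, x + y * d)"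

lemma mmul_mcomb:
  "tr2 N = 0 \<Longrightarrow> mmul (mcomb N x y) (mcomb N x' y') = mcomb N (x * x' - det2 N * y * y') (x * y' + x' * y)"
  by (cases N) (simp add: algebra_simps eq_neg_iff_add_eq_0[symmetric])

lemma det2_mcomb: "tr2 N = 0 \<Longrightarrow> det2 (mcomb N x y) = x\<^sup>2 + det2 N * y\<^sup>2"
  by (cases N) (simp add: algebra_simps power2_eq_square eq_neg_iff_add_eq_0[symmetric])

lemma mcomb_1_0: "mcomb N 1 0 = mI"
  by (cases N) (simp add: mI_def)

text \<open>If c and s satisfy the addition laws of this multiplication (cos and sin, cosh and sinh,
  or 1 and id), then u \<mapsto> mcomb N (c u) (s u) is a one-parameter group, and its value at
  u / n is an n-th root of its value at u.\<close>

lemma mpow_mcomb: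
  fixes c s :: "real \<Rightarrow> real"
  assumes N: "tr2 N = 0" and "c 0 = 1" "s 0 = 0"
    and c_add: "\<And>a b. c (a + b) = c a * c b - det2 N * s a * s b"
    and s_add: "\<And>a b. s (a + b) = c a * s b + s a * c b"
  shows "mpow (mcomb N (c u) (s u)) n = mcomb N (c (real n * u)) (s (real n * u))"
proof (induction n)
  case 0
  then show ?case by (simp add: assms mcomb_1_0)
next
  case (Suc n)
  have "real (Suc n) * u = real n * u + u" by (simp add: algebra_simps)
  then show ?case using Suc by (simp add: mmul_mcomb[OF N] c_add s_add algebra_simps)
qed

lemma sl2_root_of_mcomb:
  fixes c s :: "real \<Rightarrow> real"
  assumes N: "tr2 N = 0" and "c 0 = 1" "s 0 = 0"
    and "\<And>a b. c (a + b) = c a * c b - det2 N * s a * s b"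
    and "\<And>a b. s (a + b) = c a * s b + s a * c b"
    and norm: "\<And>a. (c a)\<^sup>2 + det2 N * (s a)\<^sup>2 = 1"
    and n: "n \<ge> 1" and A: "A = mcomb N (c u) (s u)"
  shows "\<exists>B. det2 B = 1 \<and> mpow B n = A"
proof (intro exI conjI)
  show "det2 (mcomb N (c (u / real n)) (s (u / real n))) = 1"
    by (simp add: det2_mcomb[OF N] norm)
  show "mpow (mcomb N (c (u / real n)) (s (u / real n))) n = A"
    using n by (simp add: mpow_mcomb[OF assms(1-5)] A)
qed

fun traceless_part :: "m2 \<Rightarrow> m2" where
  "traceless_part (a, b, c, d) = (a - (a + d) / 2, b, c, d - (a + d) / 2)"

lemma tr2_mscale_traceless_part: "tr2 (mscale k (traceless_part A)) = 0"
  by (cases A) (simp add: algebra_simps)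

lemma det2_mscale_traceless_part:
  "det2 (mscale k (traceless_part A)) = k\<^sup>2 * (det2 A - (tr2 A / 2)\<^sup>2)"
  by (cases A) (simp add: power2_eq_square field_simps)

lemma mcomb_traceless_part:
  "\<sigma> \<noteq> 0 \<Longrightarrow> A = mcomb (mscale (1 / \<sigma>) (traceless_part A)) (tr2 A / 2) \<sigma>"
  by (cases A) (simp add: field_simps)

lemma sl2_root_elliptic:
  assumes A: "det2 A = 1" and t: "\<bar>tr2 A / 2\<bar> < 1" and n: "n \<ge> 1"
  shows "\<exists>B. det2 B = 1 \<and> mpow B n = A"
proof -
  define t where "t = tr2 A / 2"
  define \<sigma> where "\<sigma> = sqrt (1 - t\<^sup>2)"
  define N where "N = mscale (1 / \<sigma>) (traceless_part A)"
  have "t\<^sup>2 < 1" using t by (simp add: t_def abs_square_less_1)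
  then have \<sigma>: "\<sigma> > 0" "\<sigma>\<^sup>2 = 1 - t\<^sup>2" by (simp_all add: \<sigma>_def)
  have trN: "tr2 N = 0" by (simp add: N_def tr2_mscale_traceless_part)
  have N: "det2 N = 1"
    using \<sigma> A \<open>t\<^sup>2 < 1\<close> by (simp add: N_def det2_mscale_traceless_part t_def[symmetric] power_divide)
  have "cos (arccos t) = t" "sin (arccos t) = \<sigma>"
    using t by (simp_all add: t_def \<sigma>_def sin_arccos_abs)
  then have A_eq: "A = mcomb N (cos (arccos t)) (sin (arccos t))"
    using mcomb_traceless_part[of \<sigma> A, folded t_def N_def] \<sigma> by simp
  show ?thesis
    by (rule sl2_root_of_mcomb[where c = cos and s = sin, OF trN _ _ _ _ _ n A_eq])
      (simp_all add: N cos_add sin_add)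
qed

lemma sl2_root_hyperbolic:
  assumes A: "det2 A = 1" and t: "tr2 A / 2 > 1" and n: "n \<ge> 1"
  shows "\<exists>B. det2 B = 1 \<and> mpow B n = A"
proof -
  define t where "t = tr2 A / 2"
  define \<sigma> where "\<sigma> = sqrt (t\<^sup>2 - 1)"
  define N where "N = mscale (1 / \<sigma>) (traceless_part A)"
  have "1 < t\<^sup>2" using t by (simp add: t_def one_less_power)
  then have \<sigma>: "\<sigma> > 0" "\<sigma>\<^sup>2 = t\<^sup>2 - 1" by (simp_all add: \<sigma>_def)
  have trN: "tr2 N = 0" by (simp add: N_def tr2_mscale_traceless_part)
  have N: "det2 N = -1"
    using \<sigma> A \<open>1 < t\<^sup>2\<close>
    by (simp add: N_def det2_mscale_traceless_part t_def[symmetric] power_divide field_simps)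
  have "cosh (arcosh t) = t" "sinh (arcosh t) = \<sigma>"
    using t by (simp_all add: t_def \<sigma>_def sinh_arcosh_real)
  then have A_eq: "A = mcomb N (cosh (arcosh t)) (sinh (arcosh t))"
    using mcomb_traceless_part[of \<sigma> A, folded t_def N_def] \<sigma> by simp
  show ?thesis
    by (rule sl2_root_of_mcomb[where c = cosh and s = sinh, OF trN _ _ _ _ _ n A_eq])
      (simp_all add: N cosh_add sinh_add cosh_square_eq)
qed

lemma sl2_root_parabolic:
  assumes A: "det2 A = 1" and t: "tr2 A = 2" and n: "n \<ge> 1"
  shows "\<exists>B. det2 B = 1 \<and> mpow B n = A"
proof -
  define N where "N = mscale 1 (traceless_part A)"
  have trN: "tr2 N = 0" by (simp add: N_def tr2_mscale_traceless_part)
  have N: "det2 N = 0" using A t by (simp add: N_def det2_mscale_traceless_part)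
  have A_eq: "A = mcomb N ((\<lambda>_. 1) (1::real)) (id 1)"
    using t mcomb_traceless_part[of 1 A] by (simp add: N_def)
  show ?thesis
    by (rule sl2_root_of_mcomb[where c = "\<lambda>_. 1" and s = id, OF trN _ _ _ _ _ n A_eq])
      (simp_all add: N)
qed

lemma sl2_root:
  assumes A: "det2 A = 1" and n: "n \<ge> 1"
  shows "\<exists>B. det2 B = 1 \<and> (mpow B n = A \<or> mpow B n = mneg A)"
proof -
  have "\<exists>B. det2 B = 1 \<and> mpow B n = A'" if "det2 A' = 1" "tr2 A' \<ge> 0" for A'
    using sl2_root_elliptic[OF that(1) _ n] sl2_root_hyperbolic[OF that(1) _ n]
      sl2_root_parabolic[OF that(1) _ n] that(2)
    by (cases "tr2 A' < 2"; cases "tr2 A' = 2") auto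
  moreover have "tr2 (mneg A) = - tr2 A" by (cases A) simp
  ultimately show ?thesis using A by (metis det2_mneg neg_0_le_iff_le nle_le)
qed

lemma divisible_PSL2_ext: "divisible_group PSL2_ext"
  unfolding divisible_group_def
proof (intro ballI allI impI)
  fix x and n :: nat assume x: "x \<in> carrier PSL2_ext" and n: "n \<ge> 1"
  obtain A s where xe: "x = (A, s)" by (cases x) auto
  have A: "det2 A = 1" "pm_rep A = A" using x xe by (auto simp: PSL2_ext_carrier)
  obtain B where B: "det2 B = 1" "mpow B n = A \<or> mpow B n = mneg A"
    using sl2_root[OF A(1) n] by blast
  have B_pow: "fst ((pm_rep B, 0::real) [^]\<^bsub>PSL2_ext\<^esub> n) = A"
    using B A by (auto simp: fst_PSL2_ext_nat_pow pm_rep_mpow_pm_rep pm_rep_mneg)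
  define t where "t = (s - snd ((pm_rep B, 0::real) [^]\<^bsub>PSL2_ext\<^esub> n)) / real n"
  have "(pm_rep B, t) \<in> carrier PSL2_ext"
    using B by (simp add: PSL2_ext_carrier pm_rep_pm_rep)
  moreover have "(pm_rep B, t) [^]\<^bsub>PSL2_ext\<^esub> n = x"
    using n by (subst PSL2_ext_nat_pow) (simp add: B_pow xe t_def)
  ultimately show "\<exists>y\<in>carrier PSL2_ext. y [^]\<^bsub>PSL2_ext\<^esub> n = x" by blast
qed

section \<open>The homogenized quasimorphism is not a homomorphism\<close>

definition S_mat :: m2 where "S_mat = (0, 1, -1, 0)"
definition U_mat :: m2 where "U_mat = (0, 1, -1, -1)"
definition V_mat :: m2 where "V_mat = (1, 1, -1, 0)"
definition T_mat :: m2 where "T_mat = (1, 1, 0, 1)"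
definition shear :: "nat \<Rightarrow> m2" where "shear k = (1, real k, 0, 1)"

definition ext_S :: "m2 \<times> real" where "ext_S = (S_mat, 0)"
definition ext_U :: "m2 \<times> real" where "ext_U = (U_mat, 0)"

lemma ext_S_carrier: "ext_S \<in> carrier PSL2_ext"
  by (simp add: ext_S_def S_mat_def PSL2_ext_carrier)

lemma ext_U_carrier: "ext_U \<in> carrier PSL2_ext"
  by (simp add: ext_U_def U_mat_def PSL2_ext_carrier)

lemma arg_cocycle_S_S: "arg_cocycle S_mat S_mat = 0"
proof -
  have "su_alpha (mmul S_mat S_mat) / (su_alpha S_mat * su_alpha S_mat) = 1"
    by (simp add: S_mat_def complex_eq_iff Re_divide Im_divide)
  then show ?thesis by (simp add: arg_cocycle_def)
qed

lemma arg_cocycle_S_U: "arg_cocycle S_mat U_mat = 0"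
proof -
  have "su_alpha (mmul S_mat U_mat) / (su_alpha S_mat * su_alpha U_mat) = 1"
    by (simp add: S_mat_def U_mat_def complex_eq_iff Re_divide Im_divide power2_eq_square)
  then show ?thesis by (simp add: arg_cocycle_def)
qed

lemma arg_cocycle_V_U: "arg_cocycle V_mat U_mat = 0"
proof -
  have q: "su_alpha (mmul V_mat U_mat) / (su_alpha V_mat * su_alpha U_mat) = complex_of_real (4 / 5)"
    by (simp add: V_mat_def U_mat_def complex_eq_iff Re_divide Im_divide power2_eq_square)
  show ?thesis unfolding arg_cocycle_def q Arg_of_real by simp
qed

lemma arg_cocycle_U_U_neg: "arg_cocycle U_mat U_mat < 0"
  by (simp add: arg_cocycle_def Arg_neg_iff U_mat_def Im_divide power2_eq_square)

lemma ext_S_square: "ext_S \<otimes>\<^bsub>PSL2_ext\<^esub> ext_S = \<one>\<^bsub>PSL2_ext\<^esub>"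
  by (simp add: ext_S_def PSL2_ext_mult PSL2_ext_one arg_cocycle_S_S) (simp add: S_mat_def mI_def)

lemma ext_S_mult_ext_U: "ext_S \<otimes>\<^bsub>PSL2_ext\<^esub> ext_U = (T_mat, 0)"
  by (simp add: ext_S_def ext_U_def PSL2_ext_mult arg_cocycle_S_U) (simp add: S_mat_def U_mat_def T_mat_def)

lemma ext_U_cube: "ext_U [^]\<^bsub>PSL2_ext\<^esub> (3::nat) = (mI, arg_cocycle U_mat U_mat + arg_cocycle V_mat U_mat)"
proof -
  have UU: "pm_rep (mmul U_mat U_mat) = V_mat" by (simp add: U_mat_def V_mat_def)
  have "pm_rep (mmul V_mat U_mat) = mI" by (simp add: U_mat_def V_mat_def mI_def)
  moreover have "det2 U_mat = 1" "pm_rep U_mat = U_mat" by (simp_all add: U_mat_def)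
  moreover have "arg_cocycle (mmul U_mat U_mat) U_mat = arg_cocycle V_mat U_mat"
    using arg_cocycle_pm_rep_left[of "mmul U_mat U_mat" U_mat] UU by simp
  ultimately show ?thesis
    using UU by (simp add: numeral_3_eq_3 nat_pow_Suc ext_U_def PSL2_ext_mult PSL2_ext_one)
qed

lemma homogenization_central: "homogenization PSL2_ext snd (mI, c) = c"
proof (rule group.homogenization_eqI[OF group_PSL2_ext])
  have "(mI, 0::real) [^]\<^bsub>PSL2_ext\<^esub> n = (mI, 0)" for n :: nat
    using monoid.nat_pow_one[OF group.is_monoid[OF group_PSL2_ext], of n] by (simp add: PSL2_ext_one)
  then have "(mI, c) [^]\<^bsub>PSL2_ext\<^esub> (Suc n) = (mI, real (Suc n) * c)" for n
    by (subst PSL2_ext_nat_pow) simp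
  then show "(\<lambda>n. snd ((mI, c) [^]\<^bsub>PSL2_ext\<^esub> Suc n) / real (Suc n)) \<longlonglongrightarrow> c"
    by simp
qed

lemma homogenization_ext_U:
  "homogenization PSL2_ext snd ext_U = (arg_cocycle U_mat U_mat + arg_cocycle V_mat U_mat) / 3"
  using group.homogenization_nat_pow[OF group_PSL2_ext qm_defect_le_PSL2_ext_snd ext_U_carrier, of 3]
    ext_U_cube homogenization_central by simp

lemma homogenization_ext_S: "homogenization PSL2_ext snd ext_S = 0"
proof -
  have "ext_S [^]\<^bsub>PSL2_ext\<^esub> (2::nat) = \<one>\<^bsub>PSL2_ext\<^esub>"
    using ext_S_square ext_S_carrier group.is_monoid[OF group_PSL2_ext]
    by (simp add: numeral_2_eq_2 nat_pow_Suc monoid.l_one)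
  then show ?thesis
    using group.homogenization_nat_pow[OF group_PSL2_ext qm_defect_le_PSL2_ext_snd ext_S_carrier, of 2]
      group.homogenization_one[OF group_PSL2_ext] by simp
qed

lemma su_alpha_shear: "su_alpha (shear k) = Complex 1 (- real k / 2)"
  by (simp add: shear_def)

lemma Arg_su_alpha_shear_bounds:
  "k \<ge> 1 \<Longrightarrow> - (pi / 2) < Arg (su_alpha (shear k)) \<and> Arg (su_alpha (shear k)) < 0"
  using Arg_Re_pos[of "su_alpha (shear k)"] by (simp add: su_alpha_shear Arg_neg_iff)

lemma shear_Suc_0: "shear (Suc 0) = T_mat"
  by (simp add: shear_def T_mat_def)

lemma mmul_shear_T_mat: "mmul (shear k) T_mat = shear (Suc k)"
  by (simp add: shear_def T_mat_def)

lemma Arg_divide_mult: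
  assumes "z \<noteq> 0" "w \<noteq> 0" "v \<noteq> 0" "- pi < Arg z - Arg w - Arg v" "Arg z - Arg w - Arg v \<le> pi"
  shows "Arg (z / (w * v)) = Arg z - Arg w - Arg v"
proof (rule cis_Arg_unique)
  have "sgn (z / (w * v)) = sgn z / (sgn w * sgn v)"
    using assms by (simp add: sgn_eq norm_mult norm_divide field_simps)
  then show "sgn (z / (w * v)) = cis (Arg z - Arg w - Arg v)"
    using assms by (simp add: cis_Arg[symmetric] cis_mult cis_divide diff_diff_eq)
qed (use assms in auto)

lemma arg_cocycle_shear:
  assumes "k \<ge> 1"
  shows "arg_cocycle (shear k) T_mat
           = Arg (su_alpha (shear (Suc k))) - Arg (su_alpha (shear k)) - Arg (su_alpha T_mat)"
proof -
  have "su_alpha (shear j) \<noteq> 0" for j by (simp add: su_alpha_shear complex_eq_iff)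
  moreover note Arg_su_alpha_shear_bounds[of "Suc k"] Arg_su_alpha_shear_bounds[OF assms]
    Arg_su_alpha_shear_bounds[of "Suc 0", unfolded shear_Suc_0]
  ultimately show ?thesis
    unfolding arg_cocycle_def mmul_shear_T_mat
    by (intro Arg_divide_mult) (auto simp: shear_Suc_0[symmetric])
qed

text \<open>The central coordinate of T^n differs from - n Arg \<alpha>(T) by a bounded amount, so the
  homogenization sees only the linear term.\<close>

lemma shear_nat_pow:
  "(T_mat, 0::real) [^]\<^bsub>PSL2_ext\<^esub> (Suc n)
     = (shear (Suc n), Arg (su_alpha (shear (Suc n))) - real (Suc n) * Arg (su_alpha T_mat))"
proof (induction n)
  case 0
  have "det2 T_mat = 1" by (simp add: T_mat_def)
  then show ?case
    by (simp add: nat_pow_Suc PSL2_ext_one PSL2_ext_mult) (simp add: T_mat_def shear_def)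
next
  case (Suc n)
  have "(T_mat, 0::real) [^]\<^bsub>PSL2_ext\<^esub> (Suc (Suc n))
      = (T_mat, 0::real) [^]\<^bsub>PSL2_ext\<^esub> (Suc n) \<otimes>\<^bsub>PSL2_ext\<^esub> (T_mat, 0)"
    by (simp only: nat_pow_Suc)
  also have "\<dots> = (shear (Suc (Suc n)), Arg (su_alpha (shear (Suc n))) - real (Suc n) * Arg (su_alpha T_mat)
                     + arg_cocycle (shear (Suc n)) T_mat)"
    by (simp add: Suc PSL2_ext_mult mmul_shear_T_mat) (simp add: shear_def)
  also have "\<dots> = (shear (Suc (Suc n)), Arg (su_alpha (shear (Suc (Suc n)))) - real (Suc (Suc n)) * Arg (su_alpha T_mat))"
    by (simp add: arg_cocycle_shear algebra_simps)
  finally show ?case .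
qed

lemma homogenization_T_mat: "homogenization PSL2_ext snd (T_mat, 0) = - Arg (su_alpha T_mat)"
proof (rule group.homogenization_eqI[OF group_PSL2_ext])
  let ?A = "\<lambda>n. Arg (su_alpha (shear (Suc n)))"
  have "\<bar>?A n\<bar> \<le> pi" for n using Arg_bounded[of "su_alpha (shear (Suc n))"] by auto
  then have "norm (?A n / real (Suc n)) \<le> norm (inverse (real (Suc n))) * pi" for n
    by (simp add: divide_inverse abs_mult mult.commute mult_left_mono)
  then have "(\<lambda>n. ?A n / real (Suc n)) \<longlonglongrightarrow> 0"
    by (rule tendsto_0_le[OF LIMSEQ_inverse_real_of_nat always_eventually[OF allI]])
  then have "(\<lambda>n. ?A n / real (Suc n) - Arg (su_alpha T_mat)) \<longlonglongrightarrow> 0 - Arg (su_alpha T_mat)"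
    by (intro tendsto_diff tendsto_const)
  moreover have "snd ((T_mat, 0::real) [^]\<^bsub>PSL2_ext\<^esub> Suc n) / real (Suc n)
      = ?A n / real (Suc n) - Arg (su_alpha T_mat)" for n
    by (simp add: shear_nat_pow diff_divide_distrib)
  ultimately show "(\<lambda>n. snd ((T_mat, 0::real) [^]\<^bsub>PSL2_ext\<^esub> Suc n) / real (Suc n))
      \<longlonglongrightarrow> - Arg (su_alpha T_mat)"
    by simp
qed

text \<open>In PSL2(R) the images of ext_S and ext_U have orders 2 and 3, so their homogenized
  values come from central elements, while their product is the shear.\<close>

lemma homogenization_PSL2_ext_not_additive:
  "homogenization PSL2_ext snd (ext_S \<otimes>\<^bsub>PSL2_ext\<^esub> ext_U)
     \<noteq> homogenization PSL2_ext snd ext_S + homogenization PSL2_ext snd ext_U"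
proof -
  have "Arg (su_alpha T_mat) < 0" using Arg_su_alpha_shear_bounds[of "Suc 0"] by (simp add: shear_Suc_0)
  then show ?thesis
    using arg_cocycle_U_U_neg arg_cocycle_V_U
    by (simp add: ext_S_mult_ext_U homogenization_T_mat homogenization_ext_S homogenization_ext_U)
qed

theorem theoremA:
  shows "\<exists>G :: nat monoid. group G \<and> countable (carrier G) \<and>
     (\<forall>m\<ge>1. \<forall>w\<in>carrier (free_group m) - commutator_subgroup_free m.
        word_map_surjective G m w) \<and>
     \<not> qm_quotient_finite_dim G"
proof -
  have "homogenization PSL2_ext snd \<in> homogeneous_qm PSL2_ext"
    by (rule group.homogenization_in_homogeneous_qm[OF group_PSL2_ext qm_defect_le_PSL2_ext_snd])
  then obtain G :: "nat monoid" where
    "group G" "countable (carrier G)" "divisible_group G" "\<not> qm_quotient_finite_dim G"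
    using countable_divisible_group_infinite_dim_qm[OF group_PSL2_ext divisible_PSL2_ext _
        ext_S_carrier ext_U_carrier homogenization_PSL2_ext_not_additive]
    by blast
  then show ?thesis
    using divisible_group_word_map_surjective by blast
qed

end
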